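(* Let $f=z^4+f_2z^2+f_3z+f_4$ with $f_j\in\mathbb{R}[x,y]$ homogeneous of degree $j$ ($j=2,3,4$), and assume $\gcd(f_3,4f_4-f_2^2)=1$. Then the number of orthogonal equivalence classes of representations of $f$ as a sum of three squares of quadratic forms in $\mathbb{R}[x,y,z]$ equals the number of binary quadratic forms $\xi\in\mathbb{R}[x,y]$ for which there exists a binary cubic form $\eta\in\mathbb{R}[x,y]$ with $\eta^2+f_3^2=(f_2-\xi)(4f_4-\xi^2)$, $f_2-\xi$ psd and $4f_4-\xi^2$ psd.
   Context: psd means taking only nonnegative values on real points. Two representations $f=\sum_{i=1}^3p_i^2=\sum_{i=1}^3p_i'^2$ with quadratic forms $p_i,p_i'$ are orthogonally equivalent if there is $S=(s_{ij})\in O_3(\mathbb{R})$ with $p'_j=\sum_i s_{ij}p_i$ for $j=1,2,3$. *)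

theory Defs
  imports "HOL-Analysis.Analysis" "HOL-Computational_Algebra.Computational_Algebra"
    "HOL-Library.Equipollence" "HOL-Computational_Algebra.Field_as_Ring"
begin

(* Bivariate polynomials R[x,y] are modelled as real poly poly (outer variable x,
   coefficients in R[y]); trivariate polynomials R[x,y,z] as real poly poly poly
   (outer variable z, coefficients in R[x,y]). *)

definition hom2 :: "nat \<Rightarrow> real poly poly \<Rightarrow> bool" where
  "hom2 d p \<longleftrightarrow> (\<forall>i k. coeff (coeff p i) k \<noteq> 0 \<longrightarrow> i + k = d)"

definition hom3 :: "nat \<Rightarrow> real poly poly poly \<Rightarrow> bool" where
  "hom3 d p \<longleftrightarrow> (\<forall>i j k. coeff (coeff (coeff p i) j) k \<noteq> 0 \<longrightarrow> i + j + k = d)"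

definition eval2 :: "real poly poly \<Rightarrow> real \<Rightarrow> real \<Rightarrow> real" where
  "eval2 p x y = poly (poly p [:x:]) y"

definition psd2 :: "real poly poly \<Rightarrow> bool" where
  "psd2 p \<longleftrightarrow> (\<forall>x y. 0 \<le> eval2 p x y)"

definition quartic :: "real poly poly \<Rightarrow> real poly poly \<Rightarrow> real poly poly \<Rightarrow> real poly poly poly" where
  "quartic f2 f3 f4 = [:f4, f3, f2, 0, 1:]"

definition sos3_reps :: "real poly poly poly \<Rightarrow> (real poly poly poly ^ 3) set" where
  "sos3_reps f = {p. (\<forall>i. hom3 2 (p $ i)) \<and> f = (\<Sum>i\<in>UNIV. (p $ i)\<^sup>2)}"

definition orth_equiv :: "(real poly poly poly ^ 3) rel" where
  "orth_equiv = {(p, q). \<exists>S :: real^3^3. orthogonal_matrix S \<and>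
      (\<forall>j. q $ j = (\<Sum>i\<in>UNIV. smult [:[:S $ i $ j:]:] (p $ i)))}"

end

theory Submission
  imports Defs
begin

(* Write a representation as p_i = a_i z^2 + b_i z + c_i with a_i real, b_i linear and c_i
   quadratic binary forms. Comparing coefficients with z^4 + f2 z^2 + f3 z + f4 shows that a is a
   unit vector orthogonal to b, while xi = 2 <a, c> is invariant under the orthogonal group.
   Rotating a to the first axis kills b_1; then f2 - xi = b_2^2 + b_3^2,
   4 f4 - xi^2 = 4 (c_2^2 + c_3^2) and f3 = 2 (b_2 c_2 + b_3 c_3), so Lagrange's identity with
   eta = 2 (b_2 c_3 - b_3 c_2) shows that xi is admissible.
   Conversely, for admissible xi the psd form f2 - xi is a sum of two squares b_2^2 + b_3^2, and
   for a suitable sign (f3 +- i eta)/2 vanishes at the complex root of b_2 - i b_3, hence is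
   divisible by it; the real and imaginary parts of the quotient are c_2 and c_3.
   Two normalised representations with the same xi give pairs (b, c) with the same Gram data, so
   they differ by an orthogonal map of the last two coordinates: a rotation matching the b's also
   matches the c's, and a reflection would make f2 - xi divide f3 and 4 f4 - f2^2, contradicting
   the gcd hypothesis. *)

section \<open>Binary forms\<close>

text \<open>Coordinates: the outer variable of \<open>real poly poly\<close> is \<open>x\<close>, the inner one \<open>y\<close>, so
  \<open>lin_form u v = u x + v y\<close>, \<open>quad_form a b c = a x\<^sup>2 + b x y + c y\<^sup>2\<close>, and similarly for
  cubic and quartic forms (coefficients listed from \<open>x\<^sup>d\<close> down to \<open>y\<^sup>d\<close>).\<close>

definition const2 :: "real \<Rightarrow> real poly poly" where
  "const2 a = [:[:a:]:]"

definition lin_form :: "real \<Rightarrow> real \<Rightarrow> real poly poly" where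
  "lin_form u v = [:[:0, v:], [:u:]:]"

definition quad_form :: "real \<Rightarrow> real \<Rightarrow> real \<Rightarrow> real poly poly" where
  "quad_form a b c = [:[:0, 0, c:], [:0, b:], [:a:]:]"

definition cubic_form :: "real \<Rightarrow> real \<Rightarrow> real \<Rightarrow> real \<Rightarrow> real poly poly" where
  "cubic_form m0 m1 m2 m3 = [:[:0, 0, 0, m3:], [:0, 0, m2:], [:0, m1:], [:m0:]:]"

definition quartic_form :: "real \<Rightarrow> real \<Rightarrow> real \<Rightarrow> real \<Rightarrow> real \<Rightarrow> real poly poly" where
  "quartic_form p0 p1 p2 p3 p4 = [:[:0, 0, 0, 0, p4:], [:0, 0, 0, p3:], [:0, 0, p2:], [:0, p1:], [:p0:]:]"

lemma const2_0 [simp]: "const2 0 = 0"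
  and const2_1 [simp]: "const2 1 = 1"
  and const2_numeral: "const2 (numeral n) = numeral n"
  and const2_add: "const2 (a + b) = const2 a + const2 b"
  and const2_mult: "const2 (a * b) = const2 a * const2 b"
  and const2_minus: "const2 (- a) = - const2 a"
  by (simp_all add: const2_def one_pCons numeral_poly)

lemma const2_inject [simp]: "const2 a = const2 b \<longleftrightarrow> a = b"
  by (simp add: const2_def)

lemma const2_sum: "const2 (sum g A) = (\<Sum>i\<in>A. const2 (g i))"
  by (induction A rule: infinite_finite_induct) (auto simp: const2_add)

lemma const2_half_cancel: "const2 (1/2) * (2 * p) = p"
  by (simp flip: const2_numeral const2_mult mult.assoc)

lemma const2_mult_lin_form: "const2 a * lin_form u v = lin_form (a * u) (a * v)"
  by (simp add: const2_def lin_form_def)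

lemma lin_form_combination:
  "const2 a * lin_form u v + const2 b * lin_form u' v' = lin_form (a * u + b * u') (a * v + b * v')"
  by (simp add: const2_def lin_form_def algebra_simps)

lemma lin_form_mult_lin_form:
  "lin_form u v * lin_form u' v' = quad_form (u * u') (u * v' + v * u') (v * v')"
  by (simp add: lin_form_def quad_form_def algebra_simps)

lemma lin_form_mult_quad_form:
  "lin_form u v * quad_form a b c = cubic_form (u * a) (u * b + v * a) (u * c + v * b) (v * c)"
  by (simp add: lin_form_def quad_form_def cubic_form_def algebra_simps)

lemma quad_form_mult_quad_form:
  "quad_form a b c * quad_form a' b' c' =
     quartic_form (a * a') (a * b' + b * a') (a * c' + b * b' + c * a') (b * c' + c * b') (c * c')"
  by (simp add: quad_form_def quartic_form_def algebra_simps)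

lemma quad_form_add: "quad_form a b c + quad_form a' b' c' = quad_form (a + a') (b + b') (c + c')"
  by (simp add: quad_form_def)

lemma quad_form_eq_iff: "quad_form a b c = quad_form a' b' c' \<longleftrightarrow> a = a' \<and> b = b' \<and> c = c'"
  by (auto simp: quad_form_def)

lemma hom2_coeff_eq_0: "hom2 d p \<Longrightarrow> i + k \<noteq> d \<Longrightarrow> coeff (coeff p i) k = 0"
  by (auto simp: hom2_def)

lemma hom2_0_eq_const2: "hom2 0 p \<Longrightarrow> p = const2 (coeff (coeff p 0) 0)"
  by (intro poly_eqI) (auto simp: hom2_coeff_eq_0 const2_def coeff_pCons split: nat.splits)

lemma hom2_1_eq_lin_form: "hom2 1 p \<Longrightarrow> p = lin_form (coeff (coeff p 1) 0) (coeff (coeff p 0) 1)"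
  by (intro poly_eqI)
    (auto simp: hom2_coeff_eq_0 lin_form_def coeff_pCons eval_nat_numeral split: nat.splits)

lemma hom2_2_eq_quad_form:
  "hom2 2 p \<Longrightarrow> p = quad_form (coeff (coeff p 2) 0) (coeff (coeff p 1) 1) (coeff (coeff p 0) 2)"
  by (intro poly_eqI)
    (auto simp: hom2_coeff_eq_0 quad_form_def coeff_pCons eval_nat_numeral split: nat.splits)

lemma hom2_3_eq_cubic_form:
  "hom2 3 p \<Longrightarrow> p = cubic_form (coeff (coeff p 3) 0) (coeff (coeff p 2) 1)
                                (coeff (coeff p 1) 2) (coeff (coeff p 0) 3)"
  by (intro poly_eqI)
    (auto simp: hom2_coeff_eq_0 cubic_form_def coeff_pCons eval_nat_numeral split: nat.splits)

lemma hom2_4_eq_quartic_form: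
  "hom2 4 p \<Longrightarrow> p = quartic_form (coeff (coeff p 4) 0) (coeff (coeff p 3) 1)
                     (coeff (coeff p 2) 2) (coeff (coeff p 1) 3) (coeff (coeff p 0) 4)"
  by (intro poly_eqI)
    (auto simp: hom2_coeff_eq_0 quartic_form_def coeff_pCons eval_nat_numeral split: nat.splits)

lemma hom2_zero [simp]: "hom2 d 0"
  by (simp add: hom2_def)

lemma hom2_one: "hom2 0 1"
  by (auto simp: hom2_def one_pCons coeff_pCons split: nat.splits)

lemma hom2_lin_form: "hom2 1 (lin_form u v)"
  by (auto simp: hom2_def lin_form_def coeff_pCons split: nat.splits)

lemma hom2_quad_form: "hom2 2 (quad_form a b c)"
  by (auto simp: hom2_def quad_form_def coeff_pCons split: nat.splits)

lemma hom2_add: "hom2 d p \<Longrightarrow> hom2 d q \<Longrightarrow> hom2 d (p + q)"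
  unfolding hom2_def by (metis add.right_neutral coeff_add)

lemma hom2_diff: "hom2 d p \<Longrightarrow> hom2 d q \<Longrightarrow> hom2 d (p - q)"
  unfolding hom2_def by (metis diff_zero coeff_diff)

lemma hom2_const2_mult: "hom2 d p \<Longrightarrow> hom2 d (const2 a * p)"
  unfolding hom2_def by (simp add: const2_def)

lemma hom2_numeral_mult: "hom2 d p \<Longrightarrow> hom2 d (numeral n * p)"
  using hom2_const2_mult[of d p "numeral n"] by (simp add: const2_numeral)

lemma hom2_mult:
  assumes "hom2 d p" "hom2 e q"
  shows "hom2 (d + e) (p * q)"
  unfolding hom2_def
proof (intro allI impI)
  fix i k
  assume "coeff (coeff (p * q) i) k \<noteq> 0"
  then obtain a b where "a \<le> i" "b \<le> k"
    and "coeff (coeff p a) b * coeff (coeff q (i - a)) (k - b) \<noteq> 0"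
    by (auto simp: coeff_mult coeff_sum elim!: sum.not_neutral_contains_not_neutral)
  with assms have "a + b = d" "(i - a) + (k - b) = e"
    by (auto simp: hom2_def)
  with \<open>a \<le> i\<close> \<open>b \<le> k\<close> show "i + k = d + e"
    by linarith
qed

lemma hom2_power2: "hom2 d p \<Longrightarrow> hom2 (2 * d) (p\<^sup>2)"
  using hom2_mult[of d p d p] by (simp add: power2_eq_square mult_2)

lemma hom2_not_unit:
  assumes "hom2 d p" "d > 0"
  shows "\<not> is_unit p"
proof
  assume "is_unit p"
  then obtain c where "p = [:c:]" "is_unit c"
    by (auto elim: is_unit_polyE)
  moreover from \<open>is_unit c\<close> obtain c0 where "c = [:c0:]" "is_unit c0"
    by (auto simp: is_unit_poly_iff)
  ultimately show False
    using hom2_coeff_eq_0[OF assms(1), of 0 0] assms(2) by auto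
qed

lemma eval2_add [simp]: "eval2 (p + q) x y = eval2 p x y + eval2 q x y"
  and eval2_diff [simp]: "eval2 (p - q) x y = eval2 p x y - eval2 q x y"
  and eval2_mult [simp]: "eval2 (p * q) x y = eval2 p x y * eval2 q x y"
  and eval2_power [simp]: "eval2 (p ^ n) x y = eval2 p x y ^ n"
  and eval2_numeral [simp]: "eval2 (numeral k) x y = numeral k"
  by (simp_all add: eval2_def)

lemma eval2_lin_form: "eval2 (lin_form u v) x y = u * x + v * y"
  by (simp add: eval2_def lin_form_def)

lemma eval2_quad_form: "eval2 (quad_form a b c) x y = a * x\<^sup>2 + b * x * y + c * y\<^sup>2"
  by (simp add: eval2_def quad_form_def power2_eq_square algebra_simps)

lemma eval2_cubic_form:
  "eval2 (cubic_form m0 m1 m2 m3) x y = m0 * x^3 + m1 * x\<^sup>2 * y + m2 * x * y\<^sup>2 + m3 * y^3"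
  by (simp add: eval2_def cubic_form_def power2_eq_square power3_eq_cube algebra_simps)

lemma psd2_quad_form_coeffs:
  assumes "psd2 (quad_form a b c)"
  shows "0 \<le> a" "0 \<le> c" "b\<^sup>2 \<le> 4 * a * c"
proof -
  have ev: "0 \<le> a * x\<^sup>2 + b * x * y + c * y\<^sup>2" for x y
    using assms by (simp add: psd2_def eval2_quad_form)
  show a: "0 \<le> a" using ev[of 1 0] by simp
  show "0 \<le> c" using ev[of 0 1] by simp
  show "b\<^sup>2 \<le> 4 * a * c"
  proof (cases "a = 0")
    case True
    have "b = 0"
    proof (rule ccontr)
      assume "b \<noteq> 0"
      have "0 \<le> b * (- (c + 1) / b) + c" using ev[of "- (c + 1) / b" 1] True by simp
      then show False using \<open>b \<noteq> 0\<close> by simp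
    qed
    then show ?thesis using True by simp
  next
    case False
    with a have "a > 0" by simp
    have "0 \<le> a * (- b)\<^sup>2 + b * (- b) * (2 * a) + c * (2 * a)\<^sup>2" using ev by blast
    also have "\<dots> = a * (4 * a * c - b\<^sup>2)" by (simp add: power2_eq_square algebra_simps)
    finally show ?thesis using \<open>a > 0\<close> by (simp add: zero_le_mult_iff)
  qed
qed

section \<open>The orthogonal action on representations\<close>

definition const3 :: "real \<Rightarrow> real poly poly poly" where
  "const3 a = [:const2 a:]"

lemma const3_0 [simp]: "const3 0 = 0"
  and const3_1 [simp]: "const3 1 = 1"
  and const3_add: "const3 (a + b) = const3 a + const3 b"
  and const3_mult: "const3 (a * b) = const3 a * const3 b"
  by (simp_all add: const3_def const2_add const2_mult one_pCons)

lemma const3_sum: "const3 (sum g A) = (\<Sum>i\<in>A. const3 (g i))"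
  by (induction A rule: infinite_finite_induct) (auto simp: const3_add)

lemma coeff_const3_mult: "coeff (const3 a * P) n = const2 a * coeff P n"
  by (simp add: const3_def)

lemma orthogonal_matrix_sum_transform_products:
  fixes S :: "real^'n^'n" and X Y :: "'n \<Rightarrow> 'a::comm_ring_1" and f :: "real \<Rightarrow> 'a"
  assumes S: "orthogonal_matrix S"
    and f_mult: "\<And>x y. f (x * y) = f x * f y" and f_sum: "\<And>g (A :: 'n set). f (sum g A) = (\<Sum>i\<in>A. f (g i))"
    and f_1: "f 1 = 1" and f_0: "f 0 = 0"
  shows "(\<Sum>j\<in>UNIV. (\<Sum>i\<in>UNIV. f (S$i$j) * X i) * (\<Sum>l\<in>UNIV. f (S$l$j) * Y l)) = (\<Sum>i\<in>UNIV. X i * Y i)"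
proof -
  have "(\<Sum>j\<in>UNIV. (\<Sum>i\<in>UNIV. f (S$i$j) * X i) * (\<Sum>l\<in>UNIV. f (S$l$j) * Y l))
      = (\<Sum>j\<in>UNIV. \<Sum>i\<in>UNIV. \<Sum>l\<in>UNIV. f (S$i$j) * f (S$l$j) * (X i * Y l))"
    by (simp add: sum_product mult_ac)
  also have "\<dots> = (\<Sum>i\<in>UNIV. \<Sum>j\<in>UNIV. \<Sum>l\<in>UNIV. f (S$i$j) * f (S$l$j) * (X i * Y l))"
    by (rule sum.swap)
  also have "\<dots> = (\<Sum>i\<in>UNIV. \<Sum>l\<in>UNIV. \<Sum>j\<in>UNIV. f (S$i$j) * f (S$l$j) * (X i * Y l))"
    by (rule sum.cong[OF refl], rule sum.swap)
  also have "\<dots> = (\<Sum>i\<in>UNIV. \<Sum>l\<in>UNIV. f ((S ** transpose S)$i$l) * (X i * Y l))"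
    by (simp add: matrix_matrix_mult_def transpose_def f_sum f_mult sum_distrib_right)
  also have "\<dots> = (\<Sum>i\<in>UNIV. \<Sum>l\<in>UNIV. (if i = l then X i * Y l else 0))"
  proof -
    have "f ((S ** transpose S)$i$l) * (X i * Y l) = (if i = l then X i * Y l else 0)" for i l
      using S by (simp add: orthogonal_matrix_def mat_def f_1 f_0)
    then show ?thesis by (simp only:)
  qed
  also have "\<dots> = (\<Sum>i\<in>UNIV. X i * Y i)"
    by simp
  finally show ?thesis .
qed

definition orth_act :: "real^3^3 \<Rightarrow> real poly poly poly ^ 3 \<Rightarrow> real poly poly poly ^ 3" where
  "orth_act S p = (\<chi> j. \<Sum>i\<in>UNIV. const3 (S$i$j) * p$i)"

lemma orth_equiv_iff: "(p, q) \<in> orth_equiv \<longleftrightarrow> (\<exists>S. orthogonal_matrix S \<and> q = orth_act S p)"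
  by (simp add: orth_equiv_def orth_act_def vec_eq_iff const3_def const2_def)

lemma coeff_orth_act: "coeff (orth_act S p $ j) n = (\<Sum>i\<in>UNIV. const2 (S$i$j) * coeff (p$i) n)"
  by (simp add: orth_act_def coeff_sum coeff_const3_mult)

lemma orth_act_orth_act: "orth_act T (orth_act S p) = orth_act (S ** T) p"
proof -
  have "(\<Sum>j\<in>UNIV. const3 (T$j$k) * (\<Sum>i\<in>UNIV. const3 (S$i$j) * p$i))
      = (\<Sum>i\<in>UNIV. const3 ((S ** T)$i$k) * p$i)" for k
  proof -
    have "(\<Sum>j\<in>UNIV. const3 (T$j$k) * (\<Sum>i\<in>UNIV. const3 (S$i$j) * p$i))
        = (\<Sum>j\<in>UNIV. \<Sum>i\<in>UNIV. const3 (S$i$j * T$j$k) * p$i)"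
      by (simp add: sum_distrib_left const3_mult mult_ac)
    also have "\<dots> = (\<Sum>i\<in>UNIV. \<Sum>j\<in>UNIV. const3 (S$i$j * T$j$k) * p$i)"
      by (rule sum.swap)
    also have "\<dots> = (\<Sum>i\<in>UNIV. const3 ((S ** T)$i$k) * p$i)"
      by (simp add: matrix_matrix_mult_def const3_sum sum_distrib_right)
    finally show ?thesis .
  qed
  then show ?thesis by (simp add: orth_act_def vec_eq_iff)
qed

lemma orth_act_mat_1: "orth_act (mat 1) p = p"
proof -
  have "const3 (mat 1 $ i $ j) * p$i = (if i = j then p$i else 0)" for i j
    by (simp add: mat_def)
  then show ?thesis by (simp add: orth_act_def vec_eq_iff)
qed

lemma equiv_orth_equiv: "equiv UNIV orth_equiv"
proof (rule equivI)
  show "orth_equiv \<subseteq> UNIV \<times> UNIV"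
    by simp
  show "refl orth_equiv"
    unfolding refl_on_def orth_equiv_iff by (metis orth_act_mat_1 orthogonal_matrix_id UNIV_I)
  show "sym orth_equiv"
    unfolding sym_def orth_equiv_iff
    by (metis orth_act_orth_act orth_act_mat_1 orthogonal_matrix_def orthogonal_matrix_transpose)
  show "trans orth_equiv"
    unfolding trans_def orth_equiv_iff by (metis orth_act_orth_act orthogonal_matrix_mul)
qed

lemma hom3_add: "hom3 d P \<Longrightarrow> hom3 d R \<Longrightarrow> hom3 d (P + R)"
  unfolding hom3_def by (metis add.right_neutral coeff_add)

lemma hom3_const3_mult: "hom3 d P \<Longrightarrow> hom3 d (const3 a * P)"
  by (auto simp: hom3_def const3_def const2_def)

lemma hom3_zero [simp]: "hom3 d 0"
  by (simp add: hom3_def)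

lemma hom3_sum: "(\<And>i. i \<in> A \<Longrightarrow> hom3 d (g i)) \<Longrightarrow> hom3 d (sum g A)"
  by (induction A rule: infinite_finite_induct) (auto intro: hom3_add)

lemma orth_act_in_sos3_reps:
  fixes p :: "real poly poly poly ^ 3"
  assumes "p \<in> sos3_reps f" "orthogonal_matrix S"
  shows "orth_act S p \<in> sos3_reps f"
proof -
  have "(\<Sum>j\<in>UNIV. (orth_act S p $ j)\<^sup>2)
      = (\<Sum>j\<in>UNIV. (\<Sum>i\<in>UNIV. const3 (S$i$j) * p$i) * (\<Sum>l\<in>UNIV. const3 (S$l$j) * p$l))"
    by (simp add: orth_act_def power2_eq_square)
  also have "\<dots> = (\<Sum>i\<in>UNIV. p$i * p$i)"
    by (rule orthogonal_matrix_sum_transform_products[OF assms(2)]) (auto simp: const3_mult const3_sum)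
  finally have "(\<Sum>j\<in>UNIV. (orth_act S p $ j)\<^sup>2) = f"
    using assms(1) by (simp add: sos3_reps_def power2_eq_square)
  moreover have "hom3 2 (orth_act S p $ j)" for j
    using assms(1) by (auto simp: orth_act_def sos3_reps_def intro!: hom3_sum hom3_const3_mult)
  ultimately show ?thesis by (simp add: sos3_reps_def)
qed

section \<open>Normal representations and the invariant \<open>\<xi>\<close>\<close>

lemma hom3_2_coeffs:
  assumes "hom3 2 P"
  shows "P = [:coeff P 0, coeff P 1, coeff P 2:]"
    and "hom2 2 (coeff P 0)" "hom2 1 (coeff P 1)" "hom2 0 (coeff P 2)"
proof -
  have z: "i + j + k \<noteq> 2 \<Longrightarrow> coeff (coeff (coeff P i) j) k = 0" for i j k
    using assms by (auto simp: hom3_def)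
  show "P = [:coeff P 0, coeff P 1, coeff P 2:]"
    by (intro poly_eqI) (auto simp: z coeff_pCons eval_nat_numeral split: nat.splits)
  show "hom2 2 (coeff P 0)"
    unfolding hom2_def using z[of 0] by (metis add_0)
  show "hom2 1 (coeff P 1)"
    unfolding hom2_def using z[of 1] by (metis add.assoc one_add_one add_left_cancel)
  show "hom2 0 (coeff P 2)"
    unfolding hom2_def using z[of 2] by (metis add.right_neutral add.assoc add_left_cancel)
qed

lemma hom3_2_pCons:
  "hom2 2 A \<Longrightarrow> hom2 1 B \<Longrightarrow> hom2 0 C \<Longrightarrow> hom3 2 [:A, B, C:]"
  unfolding hom3_def hom2_def by (auto simp: coeff_pCons split: nat.splits)

lemma power2_pCons3:
  fixes A B C :: "'a::comm_ring_1"
  shows "[:A, B, C:]\<^sup>2 = [:A\<^sup>2, 2 * A * B, B\<^sup>2 + 2 * A * C, 2 * B * C, C\<^sup>2:]"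
  by (simp add: power2_eq_square algebra_simps)

lemma sos3_reps_quartic_coeffs:
  fixes p :: "real poly poly poly ^ 3"
  assumes "p \<in> sos3_reps (quartic f2 f3 f4)"
  shows "(\<Sum>i\<in>UNIV. (coeff (p$i) 2)\<^sup>2) = 1"
    and "(\<Sum>i\<in>UNIV. coeff (p$i) 1 * coeff (p$i) 2) = 0"
    and "(\<Sum>i\<in>UNIV. (coeff (p$i) 1)\<^sup>2 + 2 * coeff (p$i) 0 * coeff (p$i) 2) = f2"
    and "(\<Sum>i\<in>UNIV. 2 * coeff (p$i) 0 * coeff (p$i) 1) = f3"
    and "(\<Sum>i\<in>UNIV. (coeff (p$i) 0)\<^sup>2) = f4"
proof -
  have "hom3 2 (p$i)" for i
    using assms by (simp add: sos3_reps_def)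
  then have "p$i = [:coeff (p$i) 0, coeff (p$i) 1, coeff (p$i) 2:]" for i
    by (rule hom3_2_coeffs(1))
  then have "quartic f2 f3 f4 = (\<Sum>i\<in>UNIV. [:coeff (p$i) 0, coeff (p$i) 1, coeff (p$i) 2:]\<^sup>2)"
    using assms by (simp add: sos3_reps_def)
  then show "(\<Sum>i\<in>UNIV. (coeff (p$i) 2)\<^sup>2) = 1"
    and "(\<Sum>i\<in>UNIV. coeff (p$i) 1 * coeff (p$i) 2) = 0"
    and "(\<Sum>i\<in>UNIV. (coeff (p$i) 1)\<^sup>2 + 2 * coeff (p$i) 0 * coeff (p$i) 2) = f2"
    and "(\<Sum>i\<in>UNIV. 2 * coeff (p$i) 0 * coeff (p$i) 1) = f3"
    and "(\<Sum>i\<in>UNIV. (coeff (p$i) 0)\<^sup>2) = f4"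
    unfolding power2_pCons3 quartic_def sum_3 by (simp_all add: algebra_simps)
qed

definition rep_xi :: "real poly poly poly ^ 3 \<Rightarrow> real poly poly" where
  "rep_xi p = 2 * (\<Sum>i\<in>UNIV. coeff (p$i) 2 * coeff (p$i) 0)"

lemma rep_xi_orth_act: "orthogonal_matrix S \<Longrightarrow> rep_xi (orth_act S p) = rep_xi p"
  unfolding rep_xi_def coeff_orth_act
  by (subst orthogonal_matrix_sum_transform_products) (auto simp: const2_mult const2_sum)

lemma rep_xi_orth_equiv: "(p, q) \<in> orth_equiv \<Longrightarrow> rep_xi p = rep_xi q"
  unfolding orth_equiv_iff using rep_xi_orth_act by auto

definition normal_rep :: "real poly poly poly ^ 3 \<Rightarrow> bool" where
  "normal_rep q \<longleftrightarrow> coeff (q$1) 2 = 1 \<and> coeff (q$2) 2 = 0 \<and> coeff (q$3) 2 = 0"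

text \<open>The \<open>z\<^sup>2\<close>-coefficients form a unit vector, which an orthogonal matrix moves to the first axis.\<close>

lemma exists_orth_equiv_normal_rep:
  fixes p :: "real poly poly poly ^ 3"
  assumes p: "p \<in> sos3_reps (quartic f2 f3 f4)"
  obtains q where "q \<in> sos3_reps (quartic f2 f3 f4)" "(p, q) \<in> orth_equiv" "normal_rep q"
proof -
  define a :: "real^3" where "a = (\<chi> i. coeff (coeff (coeff (p$i) 2) 0) 0)"
  have ca: "coeff (p$i) 2 = const2 (a$i)" for i
    using p hom2_0_eq_const2[OF hom3_2_coeffs(4)] by (auto simp: a_def sos3_reps_def)
  have "const2 (\<Sum>i\<in>UNIV. (a$i)\<^sup>2) = const2 1"
    using sos3_reps_quartic_coeffs(1)[OF p] by (simp add: ca const2_sum const2_mult power2_eq_square)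
  then have "(\<Sum>i\<in>UNIV. (a$i)\<^sup>2) = 1"
    by (simp only: const2_inject)
  then have "norm a = 1"
    by (simp add: norm_eq_1 inner_vec_def power2_eq_square)
  then obtain A where A: "orthogonal_matrix A" "A *v axis 1 1 = a"
    using orthogonal_matrix_exists_basis by metis
  then have ta: "transpose A *v a = axis 1 1"
    by (metis matrix_vector_mul_assoc matrix_vector_mul_lid orthogonal_matrix_def)
  have "coeff (orth_act A p $ j) 2 = const2 ((transpose A *v a)$j)" for j
    by (simp add: coeff_orth_act ca const2_sum const2_mult matrix_vector_mult_def transpose_def mult.commute)
  then have "normal_rep (orth_act A p)"
    using ta by (simp add: normal_rep_def axis_def)
  moreover have "(p, orth_act A p) \<in> orth_equiv"
    using A(1) by (auto simp: orth_equiv_iff)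
  ultimately show ?thesis
    using that orth_act_in_sos3_reps[OF p A(1)] by blast
qed

lemma normal_repE:
  fixes q :: "real poly poly poly ^ 3"
  assumes q: "q \<in> sos3_reps (quartic f2 f3 f4)" and n: "normal_rep q"
  obtains c1 c2 c3 b2 b3 where
    "q$1 = [:c1, 0, 1:]" "q$2 = [:c2, b2:]" "q$3 = [:c3, b3:]"
    "hom2 2 c1" "hom2 2 c2" "hom2 2 c3" "hom2 1 b2" "hom2 1 b3"
    "f2 = 2 * c1 + b2\<^sup>2 + b3\<^sup>2" "f3 = 2 * (b2 * c2 + b3 * c3)" "f4 = c1\<^sup>2 + c2\<^sup>2 + c3\<^sup>2"
    "rep_xi q = 2 * c1"
proof -
  have h: "hom3 2 (q$i)" for i using q by (auto simp: sos3_reps_def)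
  have n1: "coeff (q$1) 2 = 1" "coeff (q$2) 2 = 0" "coeff (q$3) 2 = 0"
    using n by (auto simp: normal_rep_def)
  have z: "coeff (q$1) 1 = 0"
    using sos3_reps_quartic_coeffs(2)[OF q] n1 by (simp add: sum_3)
  define c1 c2 c3 b2 b3 where "c1 = coeff (q$1) 0" "c2 = coeff (q$2) 0" "c3 = coeff (q$3) 0"
    "b2 = coeff (q$2) 1" "b3 = coeff (q$3) 1"
  have "q$1 = [:c1, 0, 1:]" "q$2 = [:c2, b2:]" "q$3 = [:c3, b3:]"
    using hom3_2_coeffs(1)[OF h[of 1]] hom3_2_coeffs(1)[OF h[of 2]] hom3_2_coeffs(1)[OF h[of 3]] n1 z
    by (auto simp: c1_c2_c3_b2_b3_def)
  moreover have "hom2 2 c1" "hom2 2 c2" "hom2 2 c3" "hom2 1 b2" "hom2 1 b3"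
    using hom3_2_coeffs(2,3) h by (auto simp: c1_c2_c3_b2_b3_def)
  moreover have "f2 = 2 * c1 + b2\<^sup>2 + b3\<^sup>2"
    using sos3_reps_quartic_coeffs(3)[OF q] n1 z
    by (simp add: c1_c2_c3_b2_b3_def sum_3 algebra_simps power2_eq_square)
  moreover have "f3 = 2 * (b2 * c2 + b3 * c3)"
    using sos3_reps_quartic_coeffs(4)[OF q] n1 z by (simp add: c1_c2_c3_b2_b3_def sum_3 algebra_simps)
  moreover have "f4 = c1\<^sup>2 + c2\<^sup>2 + c3\<^sup>2"
    using sos3_reps_quartic_coeffs(5)[OF q] by (simp add: c1_c2_c3_b2_b3_def sum_3)
  moreover have "rep_xi q = 2 * c1"
    using n1 by (simp add: c1_c2_c3_b2_b3_def rep_xi_def sum_3)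
  ultimately show ?thesis
    using that by blast
qed

lemma normal_rep_in_sos3_reps:
  assumes "hom2 2 c1" "hom2 2 c2" "hom2 2 c3" "hom2 1 b2" "hom2 1 b3"
    and "f2 = 2 * c1 + b2\<^sup>2 + b3\<^sup>2" "f3 = 2 * (b2 * c2 + b3 * c3)" "f4 = c1\<^sup>2 + c2\<^sup>2 + c3\<^sup>2"
  defines "q \<equiv> vector [[:c1, 0, 1:], [:c2, b2:], [:c3, b3:]] :: real poly poly poly ^ 3"
  shows "q \<in> sos3_reps (quartic f2 f3 f4)" "normal_rep q" "rep_xi q = 2 * c1"
proof -
  have "hom3 2 (q$i)" for i
  proof -
    have "hom3 2 [:c1, 0, 1:]" "hom3 2 [:c2, b2:]" "hom3 2 [:c3, b3:]"
      using hom3_2_pCons[of c1 0 1] hom3_2_pCons[of c2 b2 0] hom3_2_pCons[of c3 b3 0] assms(1-5)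
      by (simp_all add: hom2_one)
    then show ?thesis using exhaust_3[of i] by (auto simp: q_def)
  qed
  moreover have "(\<Sum>i\<in>UNIV. (q$i)\<^sup>2) = quartic f2 f3 f4"
  proof -
    have "(\<Sum>i\<in>UNIV. (q$i)\<^sup>2) = [:c1, 0, 1:]\<^sup>2 + [:c2, b2, 0:]\<^sup>2 + [:c3, b3, 0:]\<^sup>2"
      by (simp add: q_def sum_3)
    also have "\<dots> = quartic f2 f3 f4"
      unfolding power2_pCons3 quartic_def assms(6-8) by (simp add: algebra_simps power2_eq_square)
    finally show ?thesis .
  qed
  ultimately show "q \<in> sos3_reps (quartic f2 f3 f4)"
    by (simp add: sos3_reps_def)
  show "normal_rep q" "rep_xi q = 2 * c1"
    by (simp_all add: normal_rep_def rep_xi_def q_def sum_3 numeral_2_eq_2)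
qed

definition admissible_xi :: "real poly poly \<Rightarrow> real poly poly \<Rightarrow> real poly poly \<Rightarrow> real poly poly \<Rightarrow> bool" where
  "admissible_xi f2 f3 f4 \<xi> \<longleftrightarrow> hom2 2 \<xi> \<and> (\<exists>\<eta>. hom2 3 \<eta> \<and>
     \<eta>\<^sup>2 + f3\<^sup>2 = (f2 - \<xi>) * (4 * f4 - \<xi>\<^sup>2) \<and> psd2 (f2 - \<xi>) \<and> psd2 (4 * f4 - \<xi>\<^sup>2))"

text \<open>\<open>\<eta> = 2 (b\<^sub>2 c\<^sub>3 - b\<^sub>3 c\<^sub>2)\<close>, and the identity is Lagrange's.\<close>

lemma admissible_rep_xi:
  assumes q: "q \<in> sos3_reps (quartic f2 f3 f4)"
  shows "admissible_xi f2 f3 f4 (rep_xi q)"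
proof -
  obtain q' where q': "q' \<in> sos3_reps (quartic f2 f3 f4)" "(q, q') \<in> orth_equiv" "normal_rep q'"
    using exists_orth_equiv_normal_rep[OF q] .
  obtain c1 c2 c3 b2 b3 where s:
    "hom2 2 c1" "hom2 2 c2" "hom2 2 c3" "hom2 1 b2" "hom2 1 b3"
    "f2 = 2 * c1 + b2\<^sup>2 + b3\<^sup>2" "f3 = 2 * (b2 * c2 + b3 * c3)" "f4 = c1\<^sup>2 + c2\<^sup>2 + c3\<^sup>2"
    "rep_xi q = 2 * c1"
    using normal_repE[OF q'(1,3)] rep_xi_orth_equiv[OF q'(2)] by metis
  have e2: "f2 - rep_xi q = b2\<^sup>2 + b3\<^sup>2"
    using s by simp
  have e4: "4 * f4 - (rep_xi q)\<^sup>2 = 4 * (c2\<^sup>2 + c3\<^sup>2)"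
    using s by (simp add: algebra_simps power2_eq_square)
  define \<eta> where "\<eta> = 2 * (b2 * c3 - b3 * c2)"
  have "hom2 3 (b2 * c3)" "hom2 3 (b3 * c2)"
    using hom2_mult[OF s(4) s(3)] hom2_mult[OF s(5) s(2)] by (simp_all add: eval_nat_numeral)
  then have "hom2 3 \<eta>"
    unfolding \<eta>_def by (intro hom2_numeral_mult hom2_diff)
  moreover have "\<eta>\<^sup>2 + f3\<^sup>2 = (f2 - rep_xi q) * (4 * f4 - (rep_xi q)\<^sup>2)"
    unfolding e2 e4 s(7) \<eta>_def by (simp add: algebra_simps power2_eq_square)
  moreover have "psd2 (f2 - rep_xi q)" "psd2 (4 * f4 - (rep_xi q)\<^sup>2)"
    unfolding e2 e4 psd2_def by simp_all
  moreover have "hom2 2 (rep_xi q)"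
    using s by (simp add: hom2_numeral_mult)
  ultimately show ?thesis
    unfolding admissible_xi_def by blast
qed

section \<open>Dividing binary forms by a factor vanishing at a common root\<close>

lemma map_poly_add_hom:
  assumes "f 0 = 0" "\<And>x y. f (x + y) = f x + f y"
  shows "map_poly f (p + q) = map_poly f p + map_poly f q"
  by (intro poly_eqI) (simp add: coeff_map_poly assms)

lemma map_poly_mult_hom:
  fixes f :: "'a::comm_ring_1 \<Rightarrow> 'b::comm_ring_1"
  assumes f_0: "f 0 = 0" and f_add: "\<And>x y. f (x + y) = f x + f y"
    and f_mult: "\<And>x y. f (x * y) = f x * f y"
  shows "map_poly f (p * q) = map_poly f p * map_poly f q"
proof (induction p)
  case (pCons a p)
  have "map_poly f (pCons a p * q) = map_poly f (smult a q + pCons 0 (p * q))"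
    by simp
  also have "\<dots> = smult (f a) (map_poly f q) + pCons 0 (map_poly f p * map_poly f q)"
    by (simp add: map_poly_add_hom[OF f_0 f_add] map_poly_smult[OF f_0 f_mult]
        map_poly_pCons[of f, OF f_0] pCons.IH f_0)
  also have "\<dots> = map_poly f (pCons a p) * map_poly f q"
    by (simp add: map_poly_pCons[of f, OF f_0])
  finally show ?case .
qed simp

text \<open>\<open>ceval P z\<close> is the value \<open>P(z, 1)\<close> at a complex point.\<close>

definition ceval :: "real poly poly \<Rightarrow> complex \<Rightarrow> complex" where
  "ceval P z = poly (map_poly (\<lambda>c. complex_of_real (poly c 1)) P) z"

lemma ceval_add [simp]: "ceval (p + q) z = ceval p z + ceval q z"
  by (simp add: ceval_def map_poly_add_hom)

lemma ceval_mult [simp]: "ceval (p * q) z = ceval p z * ceval q z"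
  by (simp add: ceval_def map_poly_mult_hom)

lemma ceval_0 [simp]: "ceval 0 z = 0"
  by (simp add: ceval_def)

lemma ceval_minus [simp]: "ceval (- p) z = - ceval p z"
proof -
  have "ceval (- p) z + ceval p z = 0"
    by (simp flip: ceval_add)
  then show ?thesis
    by (simp add: eq_neg_iff_add_eq_0)
qed

lemma ceval_diff [simp]: "ceval (p - q) z = ceval p z - ceval q z"
  using ceval_add[of p "- q" z] by simp

lemma ceval_power2 [simp]: "ceval (p\<^sup>2) z = (ceval p z)\<^sup>2"
  by (simp add: power2_eq_square)

lemma ceval_const2 [simp]: "ceval (const2 a) z = complex_of_real a"
  by (simp add: ceval_def const2_def map_poly_pCons)

lemma ceval_lin_form: "ceval (lin_form u v) z = complex_of_real u * z + complex_of_real v"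
  by (simp add: ceval_def lin_form_def map_poly_pCons)

lemma ceval_quartic_form_remainder:
  "ceval (quartic_form 0 0 0 r1 r0) z = complex_of_real r1 * z + complex_of_real r0"
  by (simp add: ceval_def quartic_form_def map_poly_pCons)

lemma quartic_form_add:
  "quartic_form a b c d e + quartic_form a' b' c' d' e' =
     quartic_form (a + a') (b + b') (c + c') (d + d') (e + e')"
  by (simp add: quartic_form_def)

lemma quad_form_dvd_quartic_at_complex_root:
  assumes "a \<noteq> 0" "hom2 4 X" "Im r \<noteq> 0"
    and "ceval X r = 0" "ceval (quad_form a b c) r = 0"
  obtains C where "hom2 2 C" "X = quad_form a b c * C"
proof -
  obtain p0 p1 p2 p3 p4 where X: "X = quartic_form p0 p1 p2 p3 p4"
    using hom2_4_eq_quartic_form[OF assms(2)] by blast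
  define \<alpha> where "\<alpha> = p0 / a"
  define \<beta> where "\<beta> = (p1 - b * \<alpha>) / a"
  define \<gamma> where "\<gamma> = (p2 - b * \<beta> - c * \<alpha>) / a"
  define \<rho>1 where "\<rho>1 = p3 - b * \<gamma> - c * \<beta>"
  define \<rho>0 where "\<rho>0 = p4 - c * \<gamma>"
  have division: "X = quad_form a b c * quad_form \<alpha> \<beta> \<gamma> + quartic_form 0 0 0 \<rho>1 \<rho>0"
    unfolding X quad_form_mult_quad_form quartic_form_add using assms(1)
    by (simp add: \<alpha>_def \<beta>_def \<gamma>_def \<rho>1_def \<rho>0_def field_simps)
  have rem: "complex_of_real \<rho>1 * r + complex_of_real \<rho>0 = 0"
    using assms(4,5) unfolding division by (simp add: ceval_quartic_form_remainder)
  then have "Im (complex_of_real \<rho>1 * r + complex_of_real \<rho>0) = 0"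
    by simp
  then have "\<rho>1 = 0"
    using assms(3) by simp
  with rem have "\<rho>0 = 0"
    by simp
  then have "X = quad_form a b c * quad_form \<alpha> \<beta> \<gamma>"
    using division \<open>\<rho>1 = 0\<close> by (simp add: quartic_form_def)
  then show thesis
    using that hom2_quad_form by blast
qed

lemma lin_form_dvd_cubic_at_root:
  assumes "u \<noteq> 0 \<or> v \<noteq> 0" "hom2 3 m" "eval2 m (- v) u = 0"
  obtains M where "hom2 2 M" "m = lin_form u v * M"
proof -
  obtain m0 m1 m2 m3 where m: "m = cubic_form m0 m1 m2 m3"
    using hom2_3_eq_cubic_form[OF assms(2)] by blast
  have root: "- m0 * v^3 + m1 * v\<^sup>2 * u - m2 * v * u\<^sup>2 + m3 * u^3 = 0"
    using assms(3) unfolding m eval2_cubic_form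
    by (simp add: power2_eq_square power3_eq_cube algebra_simps)
  have "\<exists>\<alpha> \<beta> \<gamma>. m = lin_form u v * quad_form \<alpha> \<beta> \<gamma>"
  proof (cases "u = 0")
    case True
    with assms(1) have "v \<noteq> 0" by simp
    with root True have "m0 = 0" by simp
    then have "m = lin_form u v * quad_form (m1 / v) (m2 / v) (m3 / v)"
      unfolding m lin_form_mult_quad_form using True \<open>v \<noteq> 0\<close> by simp
    then show ?thesis by blast
  next
    case False
    define \<alpha> where "\<alpha> = m0 / u"
    define \<beta> where "\<beta> = (m1 - v * \<alpha>) / u"
    define \<gamma> where "\<gamma> = (m2 - v * \<beta>) / u"
    have "u^3 * (v * \<gamma>) = m0 * v^3 - m1 * v\<^sup>2 * u + m2 * v * u\<^sup>2"
      using False by (simp add: \<alpha>_def \<beta>_def \<gamma>_def power2_eq_square power3_eq_cube field_simps)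
    also have "\<dots> = u^3 * m3"
      using root by (simp add: algebra_simps)
    finally have "v * \<gamma> = m3"
      using False by simp
    then have "m = lin_form u v * quad_form \<alpha> \<beta> \<gamma>"
      unfolding m lin_form_mult_quad_form using False by (simp add: \<alpha>_def \<beta>_def \<gamma>_def field_simps)
    then show ?thesis by blast
  qed
  then show thesis
    using that hom2_quad_form by blast
qed

section \<open>Lifting a sum of two squares through a psd quadratic form\<close>

lemma complex_sum_power2_eq_0E:
  fixes M N :: complex
  assumes "M\<^sup>2 + N\<^sup>2 = 0"
  obtains \<sigma> :: real where "\<sigma>\<^sup>2 = 1" "complex_of_real \<sigma> * N = - \<i> * M"
proof -
  have "(N - \<i> * M) * (N + \<i> * M) = 0"
    using assms by (simp add: power2_eq_square algebra_simps)
  then consider "N = \<i> * M" | "N = - \<i> * M"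
    by (auto simp: eq_neg_iff_add_eq_0)
  then show thesis
  proof cases
    case 1
    then show thesis using that[of "- 1"] by simp
  next
    case 2
    then show thesis using that[of 1] by simp
  qed
qed

lemma lift_two_squares_perfect_square:
  assumes l: "l = lin_form u v" "l \<noteq> 0" and "hom2 3 m" "hom2 3 n" and K: "l\<^sup>2 * K = m\<^sup>2 + n\<^sup>2"
  obtains M N where "hom2 2 M" "hom2 2 N" "m = l * M" "n = l * N" "M\<^sup>2 + N\<^sup>2 = K"
proof -
  have uv: "u \<noteq> 0 \<or> v \<noteq> 0"
    using l by (auto simp: lin_form_def)
  have "eval2 l (- v) u = 0"
    by (simp add: l(1) eval2_lin_form)
  then have "(eval2 m (- v) u)\<^sup>2 + (eval2 n (- v) u)\<^sup>2 = 0"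
    using arg_cong[OF K, of "\<lambda>P. eval2 P (- v) u"] by simp
  then have "eval2 m (- v) u = 0" "eval2 n (- v) u = 0"
    by (simp_all add: sum_power2_eq_zero_iff)
  then obtain M N where M: "hom2 2 M" "m = l * M" and N: "hom2 2 N" "n = l * N"
    using lin_form_dvd_cubic_at_root[OF uv] assms(3,4) l(1) by metis
  have "l\<^sup>2 * (M\<^sup>2 + N\<^sup>2) = l\<^sup>2 * K"
    using K unfolding M(2) N(2) by (simp add: power2_eq_square algebra_simps)
  then have "M\<^sup>2 + N\<^sup>2 = K"
    using l(2) by simp
  then show thesis
    using that M N by blast
qed

lemma psd_quad_form_perfect_square:
  assumes "0 \<le> a" "0 \<le> c" "b\<^sup>2 = 4 * a * c"
  obtains u v where "quad_form a b c = (lin_form u v)\<^sup>2"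
proof (cases "a = 0")
  case True
  with assms(3) have "b = 0" by simp
  then show thesis
    using that[of 0 "sqrt c"] True assms(2)
    by (simp add: power2_eq_square lin_form_mult_lin_form)
next
  case False
  with assms(1) have "a > 0" by simp
  have "b / (2 * sqrt a) * (b / (2 * sqrt a)) = b\<^sup>2 / (4 * a)"
    using \<open>a > 0\<close> by (simp add: power2_eq_square)
  also have "\<dots> = c"
    using assms(3) \<open>a > 0\<close> by simp
  finally show thesis
    using that[of "sqrt a" "b / (2 * sqrt a)"] \<open>a > 0\<close>
    by (simp add: power2_eq_square lin_form_mult_lin_form)
qed

text \<open>A definite form splits as \<open>b\<^sub>2\<^sup>2 + b\<^sub>3\<^sup>2 = (b\<^sub>2 + \<i> b\<^sub>3)(b\<^sub>2 - \<i> b\<^sub>3)\<close>; \<open>r\<close> is the root of the first factor.\<close>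

lemma definite_quad_form_sum_two_squares:
  assumes "0 < a" "b\<^sup>2 < 4 * a * c"
  obtains b2 b3 r where "hom2 1 b2" "hom2 1 b3" "b2\<^sup>2 + b3\<^sup>2 = quad_form a b c"
    "Im r \<noteq> 0" "ceval b2 r = - \<i> * ceval b3 r"
proof -
  define sa \<beta> s where "sa = sqrt a" "\<beta> = b / (2 * sqrt a)" "s = sqrt (c - b\<^sup>2 / (4 * a))"
  have "sa > 0"
    using assms(1) by (simp add: sa_\<beta>_s_def)
  have "c - b\<^sup>2 / (4 * a) > 0"
    using assms by (simp add: field_simps)
  then have "s > 0"
    by (simp add: sa_\<beta>_s_def)
  define b2 b3 where "b2 = lin_form sa \<beta>" "b3 = lin_form 0 s"
  have "b2\<^sup>2 + b3\<^sup>2 = quad_form (sa * sa) (sa * \<beta> + \<beta> * sa) (\<beta> * \<beta> + s * s)"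
    unfolding b2_b3_def power2_eq_square lin_form_mult_lin_form quad_form_add by simp
  also have "\<dots> = quad_form a b c"
    using assms(1) \<open>c - b\<^sup>2 / (4 * a) > 0\<close>
    by (simp add: sa_\<beta>_s_def power2_eq_square[symmetric] power_divide)
  finally have sum: "b2\<^sup>2 + b3\<^sup>2 = quad_form a b c" .
  define r where "r = - (complex_of_real \<beta> + \<i> * complex_of_real s) / complex_of_real sa"
  have "Im r \<noteq> 0"
    using \<open>s > 0\<close> \<open>sa > 0\<close> by (simp add: r_def Im_divide)
  moreover have "ceval b2 r = - \<i> * ceval b3 r"
    using \<open>sa > 0\<close> by (simp add: b2_b3_def ceval_lin_form r_def field_simps)
  moreover have "hom2 1 b2" "hom2 1 b3"
    unfolding b2_b3_def by (rule hom2_lin_form)+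
  ultimately show thesis
    using that sum by blast
qed

text \<open>After flipping the sign of \<open>n\<close>, the forms \<open>b\<^sub>2 m - b\<^sub>3 n\<close> and \<open>b\<^sub>3 m + b\<^sub>2 n\<close> vanish at \<open>r\<close>, the
  non-real root of \<open>g\<close>, hence are divisible by \<open>g\<close>; the quotients are the wanted \<open>c\<^sub>2, c\<^sub>3\<close>.\<close>

lemma lift_two_squares_definite:
  assumes g: "g = quad_form a b c" "a \<noteq> 0" "b2\<^sup>2 + b3\<^sup>2 = g" "hom2 1 b2" "hom2 1 b3"
    and r: "Im r \<noteq> 0" "ceval b2 r = - \<i> * ceval b3 r"
    and mn: "hom2 3 m" "hom2 3 n" and K: "g * K = m\<^sup>2 + n\<^sup>2"
  obtains c2 c3 where "hom2 2 c2" "hom2 2 c3" "b2 * c2 + b3 * c3 = m" "c2\<^sup>2 + c3\<^sup>2 = K"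
proof -
  have "g \<noteq> 0"
    using g(1,2) by (auto simp: quad_form_def)
  have "ceval g r = 0"
    unfolding g(3)[symmetric] using r(2) by (simp add: power_mult_distrib)
  then have "(ceval m r)\<^sup>2 + (ceval n r)\<^sup>2 = 0"
    using arg_cong[OF K, of "\<lambda>P. ceval P r"] by simp
  then obtain \<sigma> :: real where \<sigma>: "\<sigma>\<^sup>2 = 1" "complex_of_real \<sigma> * ceval n r = - \<i> * ceval m r"
    by (rule complex_sum_power2_eq_0E)
  define n' where "n' = const2 \<sigma> * n"
  have "n'\<^sup>2 = const2 (\<sigma>\<^sup>2) * n\<^sup>2"
    by (simp add: n'_def power2_eq_square const2_mult mult_ac)
  then have n'_sq: "n'\<^sup>2 = n\<^sup>2"
    using \<sigma>(1) by simp
  define X Y where "X = b2 * m - b3 * n'" "Y = b3 * m + b2 * n'"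
  have "ceval X r = 0" "ceval Y r = 0"
    using \<sigma>(2) by (simp_all add: X_Y_def n'_def r(2) algebra_simps)
  moreover have "hom2 4 X" "hom2 4 Y"
    using hom2_mult[OF g(4) mn(1)] hom2_mult[OF g(5) mn(1)]
      hom2_mult[OF g(4) hom2_const2_mult[OF mn(2)]] hom2_mult[OF g(5) hom2_const2_mult[OF mn(2)]]
    by (auto simp: X_Y_def n'_def intro: hom2_add hom2_diff)
  ultimately obtain CX CY where CX: "hom2 2 CX" "X = g * CX" and CY: "hom2 2 CY" "Y = g * CY"
    using quad_form_dvd_quartic_at_complex_root[OF g(2)] r(1) \<open>ceval g r = 0\<close> g(1) by metis
  have "g * (b2 * CX + b3 * CY) = b2 * X + b3 * Y"
    unfolding CX(2) CY(2) by (simp add: algebra_simps)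
  also have "\<dots> = g * m"
    unfolding g(3)[symmetric] by (simp add: X_Y_def power2_eq_square algebra_simps)
  finally have "b2 * CX + b3 * CY = m"
    using \<open>g \<noteq> 0\<close> by simp
  moreover have "g * (g * (CX\<^sup>2 + CY\<^sup>2)) = g * (g * K)"
  proof -
    have "g * (g * (CX\<^sup>2 + CY\<^sup>2)) = X\<^sup>2 + Y\<^sup>2"
      unfolding CX(2) CY(2) by (simp add: power2_eq_square algebra_simps)
    also have "\<dots> = (b2\<^sup>2 + b3\<^sup>2) * (m\<^sup>2 + n'\<^sup>2)"
      by (simp add: X_Y_def power2_eq_square algebra_simps)
    finally show ?thesis
      by (simp add: g(3) n'_sq K)
  qed
  then have "CX\<^sup>2 + CY\<^sup>2 = K"
    using \<open>g \<noteq> 0\<close> by simp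
  ultimately show thesis
    using that CX(1) CY(1) by blast
qed

lemma lift_sum_two_squares:
  assumes g: "hom2 2 g" "psd2 g" "g \<noteq> 0" and mn: "hom2 3 m" "hom2 3 n" and K: "g * K = m\<^sup>2 + n\<^sup>2"
  obtains b2 b3 c2 c3 where "hom2 1 b2" "hom2 1 b3" "hom2 2 c2" "hom2 2 c3"
    "b2\<^sup>2 + b3\<^sup>2 = g" "b2 * c2 + b3 * c3 = m" "c2\<^sup>2 + c3\<^sup>2 = K"
proof -
  obtain a b c where abc: "g = quad_form a b c"
    using hom2_2_eq_quad_form[OF g(1)] by blast
  have psd: "0 \<le> a" "0 \<le> c" "b\<^sup>2 \<le> 4 * a * c"
    using psd2_quad_form_coeffs g(2) unfolding abc by auto
  show thesis
  proof (cases "b\<^sup>2 = 4 * a * c")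
    case True
    then obtain u v where "g = (lin_form u v)\<^sup>2"
      using psd_quad_form_perfect_square psd(1,2) abc by metis
    moreover from this have "lin_form u v \<noteq> 0"
      using g(3) by auto
    ultimately obtain M N where "hom2 2 M" "hom2 2 N" "m = lin_form u v * M" "n = lin_form u v * N"
      "M\<^sup>2 + N\<^sup>2 = K"
      using lift_two_squares_perfect_square mn K by metis
    then show thesis
      using that[of "lin_form u v" 0 M N] \<open>g = (lin_form u v)\<^sup>2\<close> hom2_lin_form by simp
  next
    case False
    with psd have "a > 0" "b\<^sup>2 < 4 * a * c"
      by (auto simp: order.order_iff_strict)
    then obtain b2 b3 r where b: "hom2 1 b2" "hom2 1 b3" "b2\<^sup>2 + b3\<^sup>2 = quad_form a b c"
      "Im r \<noteq> 0" "ceval b2 r = - \<i> * ceval b3 r"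
      by (rule definite_quad_form_sum_two_squares)
    moreover have "a \<noteq> 0"
      using \<open>a > 0\<close> by simp
    ultimately obtain c2 c3 where "hom2 2 c2" "hom2 2 c3" "b2 * c2 + b3 * c3 = m" "c2\<^sup>2 + c3\<^sup>2 = K"
      using lift_two_squares_definite[OF abc _ _ _ _ _ _ mn K] abc by metis
    then show thesis
      using that b abc by blast
  qed
qed

lemma hom2_gcd_eq_1_imp_nonzero:
  assumes "hom2 d h" "d > 0" "gcd f h = 1"
  shows "f \<noteq> 0"
  using assms hom2_not_unit by (auto simp: normalize_1_iff)

lemma exists_sos3_rep_with_xi:
  assumes f: "hom2 2 f2" "hom2 3 f3" "hom2 4 f4" "f3 \<noteq> 0" and \<xi>: "admissible_xi f2 f3 f4 \<xi>"
  obtains q where "q \<in> sos3_reps (quartic f2 f3 f4)" "rep_xi q = \<xi>"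
proof -
  obtain \<eta> where "hom2 2 \<xi>" "hom2 3 \<eta>" and eq: "\<eta>\<^sup>2 + f3\<^sup>2 = (f2 - \<xi>) * (4 * f4 - \<xi>\<^sup>2)"
    and "psd2 (f2 - \<xi>)"
    using \<xi> unfolding admissible_xi_def by blast
  have "f2 - \<xi> \<noteq> 0"
    using eq f(4) by (auto simp: sum_power2_eq_zero_iff)
  define m n K where "m = const2 (1/2) * f3" "n = const2 (1/2) * \<eta>"
    "K = const2 (1/4) * (4 * f4 - \<xi>\<^sup>2)"
  have quarter: "const2 (1/4) = const2 (1/2) * const2 (1/2)"
    by (simp flip: const2_mult)
  have "m\<^sup>2 + n\<^sup>2 = const2 (1/4) * (\<eta>\<^sup>2 + f3\<^sup>2)"
    unfolding m_n_K_def quarter by (simp add: power2_eq_square algebra_simps)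
  then have "(f2 - \<xi>) * K = m\<^sup>2 + n\<^sup>2"
    unfolding eq m_n_K_def by (simp add: mult_ac)
  moreover have "hom2 3 m" "hom2 3 n"
    unfolding m_n_K_def using f(2) \<open>hom2 3 \<eta>\<close> by (auto intro: hom2_const2_mult)
  moreover have "hom2 2 (f2 - \<xi>)"
    using f(1) \<open>hom2 2 \<xi>\<close> by (rule hom2_diff)
  ultimately obtain b2 b3 c2 c3 where b: "hom2 1 b2" "hom2 1 b3" "hom2 2 c2" "hom2 2 c3"
    "b2\<^sup>2 + b3\<^sup>2 = f2 - \<xi>" "b2 * c2 + b3 * c3 = m" "c2\<^sup>2 + c3\<^sup>2 = K"
    using lift_sum_two_squares \<open>psd2 (f2 - \<xi>)\<close> \<open>f2 - \<xi> \<noteq> 0\<close> by metis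
  define c1 where "c1 = const2 (1/2) * \<xi>"
  have c1: "hom2 2 c1" "2 * c1 = \<xi>"
    unfolding c1_def using \<open>hom2 2 \<xi>\<close>
    by (auto intro: hom2_const2_mult simp: mult.left_commute[of 2] const2_half_cancel)
  have f2: "f2 = 2 * c1 + b2\<^sup>2 + b3\<^sup>2"
    using b(5) c1(2) by (simp add: algebra_simps)
  have f3: "f3 = 2 * (b2 * c2 + b3 * c3)"
    unfolding b(6) m_n_K_def by (metis const2_half_cancel mult.left_commute)
  have "c1\<^sup>2 + K = (const2 (1/4) * 4) * f4"
    by (simp add: c1_def m_n_K_def quarter power2_eq_square algebra_simps)
  also have "const2 (1/4) * 4 = 1"
    by (simp only: const2_numeral[symmetric] const2_mult[symmetric]) simp
  finally have f4: "f4 = c1\<^sup>2 + c2\<^sup>2 + c3\<^sup>2"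
    using b(7) by (simp add: add.assoc)
  show thesis
    using that normal_rep_in_sos3_reps(1,3)[OF c1(1) b(3,4,1,2) f2 f3 f4] c1(2) by simp
qed

section \<open>Normal representations with the same \<open>\<xi>\<close> are equivalent\<close>

lemma rotation_of_equal_gram_nonzero:
  fixes u2 u3 v2 v3 s2 s3 t2 t3 :: real
  assumes u: "u2\<^sup>2 + u3\<^sup>2 \<noteq> 0"
    and uu: "u2\<^sup>2 + u3\<^sup>2 = s2\<^sup>2 + s3\<^sup>2" and uv: "u2 * v2 + u3 * v3 = s2 * t2 + s3 * t3"
    and det: "u2 * v3 - u3 * v2 = s2 * t3 - s3 * t2"
  obtains cs sn where "cs\<^sup>2 + sn\<^sup>2 = 1" "s2 = cs * u2 - sn * u3" "s3 = sn * u2 + cs * u3"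
    "t2 = cs * v2 - sn * v3" "t3 = sn * v2 + cs * v3"
proof -
  define N where "N = u2\<^sup>2 + u3\<^sup>2"
  define cs sn where "cs = (u2 * s2 + u3 * s3) / N" "sn = (u2 * s3 - u3 * s2) / N"
  have "N \<noteq> 0"
    using u by (simp add: N_def)
  have "(u2 * s2 + u3 * s3)\<^sup>2 + (u2 * s3 - u3 * s2)\<^sup>2 = N * (s2\<^sup>2 + s3\<^sup>2)"
    by (simp add: N_def power2_eq_square algebra_simps)
  then have "cs\<^sup>2 + sn\<^sup>2 = 1"
    using uu \<open>N \<noteq> 0\<close> by (simp add: cs_sn_def N_def power_divide add_divide_distrib[symmetric]
        power2_eq_square)
  moreover have "N * s2 = (u2 * s2 + u3 * s3) * u2 - (u2 * s3 - u3 * s2) * u3"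
    "N * s3 = (u2 * s3 - u3 * s2) * u2 + (u2 * s2 + u3 * s3) * u3"
    by (simp_all add: N_def power2_eq_square algebra_simps)
  then have "s2 = cs * u2 - sn * u3" "s3 = sn * u2 + cs * u3"
    using \<open>N \<noteq> 0\<close> by (simp_all add: cs_sn_def field_simps)
  moreover have "N * t2 = (u2 * s2 + u3 * s3) * v2 - (u2 * s3 - u3 * s2) * v3"
  proof -
    have "(u2 * s2 + u3 * s3) * v2 - (u2 * s3 - u3 * s2) * v3
        = s2 * (u2 * v2 + u3 * v3) - s3 * (u2 * v3 - u3 * v2)"
      by (simp add: algebra_simps)
    also have "\<dots> = (s2\<^sup>2 + s3\<^sup>2) * t2"
      unfolding uv det by (simp add: power2_eq_square algebra_simps)
    finally show ?thesis
      using uu by (simp add: N_def)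
  qed
  then have "t2 = cs * v2 - sn * v3"
    using \<open>N \<noteq> 0\<close> by (simp add: cs_sn_def field_simps)
  moreover have "N * t3 = (u2 * s3 - u3 * s2) * v2 + (u2 * s2 + u3 * s3) * v3"
  proof -
    have "(u2 * s3 - u3 * s2) * v2 + (u2 * s2 + u3 * s3) * v3
        = s3 * (u2 * v2 + u3 * v3) + s2 * (u2 * v3 - u3 * v2)"
      by (simp add: algebra_simps)
    also have "\<dots> = (s2\<^sup>2 + s3\<^sup>2) * t3"
      unfolding uv det by (simp add: power2_eq_square algebra_simps)
    finally show ?thesis
      using uu by (simp add: N_def)
  qed
  then have "t3 = sn * v2 + cs * v3"
    using \<open>N \<noteq> 0\<close> by (simp add: cs_sn_def field_simps)
  ultimately show thesis
    using that by blast
qed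

lemma rotation_of_equal_gram:
  fixes u2 u3 v2 v3 s2 s3 t2 t3 :: real
  assumes uu: "u2\<^sup>2 + u3\<^sup>2 = s2\<^sup>2 + s3\<^sup>2" and vv: "v2\<^sup>2 + v3\<^sup>2 = t2\<^sup>2 + t3\<^sup>2"
    and uv: "u2 * v2 + u3 * v3 = s2 * t2 + s3 * t3" and det: "u2 * v3 - u3 * v2 = s2 * t3 - s3 * t2"
  obtains cs sn where "cs\<^sup>2 + sn\<^sup>2 = 1" "s2 = cs * u2 - sn * u3" "s3 = sn * u2 + cs * u3"
    "t2 = cs * v2 - sn * v3" "t3 = sn * v2 + cs * v3"
proof (cases "u2\<^sup>2 + u3\<^sup>2 = 0")
  case False
  then show thesis
    using rotation_of_equal_gram_nonzero[OF _ uu uv det] that by blast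
next
  case True
  then have "u2 = 0" "u3 = 0" "s2 = 0" "s3 = 0"
    using uu by (simp_all add: sum_power2_eq_zero_iff)
  show thesis
  proof (cases "v2\<^sup>2 + v3\<^sup>2 = 0")
    case True
    then have "v2 = 0" "v3 = 0" "t2 = 0" "t3 = 0"
      using vv by (simp_all add: sum_power2_eq_zero_iff)
    then show thesis
      using that[of 1 0] \<open>u2 = 0\<close> \<open>u3 = 0\<close> \<open>s2 = 0\<close> \<open>s3 = 0\<close> by simp
  next
    case False
    have "v2 * u2 + v3 * u3 = t2 * s2 + t3 * s3" "v2 * u3 - v3 * u2 = t2 * s3 - t3 * s2"
      using uv det by (simp_all add: algebra_simps)
    then show thesis
      using rotation_of_equal_gram_nonzero[OF False vv] that
        \<open>u2 = 0\<close> \<open>u3 = 0\<close> \<open>s2 = 0\<close> \<open>s3 = 0\<close> by (metis mult_zero_right add_0)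
  qed
qed

lemma lin_forms_equal_sum_squaresE:
  assumes b: "b2 = lin_form u2 v2" "b3 = lin_form u3 v3" "d2 = lin_form s2 t2" "d3 = lin_form s3 t3"
    and sq: "b2\<^sup>2 + b3\<^sup>2 = d2\<^sup>2 + d3\<^sup>2"
  obtains (rotation) cs sn where "cs\<^sup>2 + sn\<^sup>2 = 1"
      "d2 = const2 cs * b2 - const2 sn * b3" "d3 = const2 sn * b2 + const2 cs * b3"
    | (reflection) cs sn where "cs\<^sup>2 + sn\<^sup>2 = 1"
      "d2 = const2 cs * b2 - const2 sn * b3" "d3 = - (const2 sn * b2 + const2 cs * b3)"
      "s2 * t3 - s3 * t2 \<noteq> 0"
proof -
  have "quad_form (u2 * u2 + u3 * u3) (u2 * v2 + v2 * u2 + (u3 * v3 + v3 * u3)) (v2 * v2 + v3 * v3)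
      = quad_form (s2 * s2 + s3 * s3) (s2 * t2 + t2 * s2 + (s3 * t3 + t3 * s3)) (t2 * t2 + t3 * t3)"
    using sq unfolding b power2_eq_square lin_form_mult_lin_form quad_form_add .
  then have uu: "u2\<^sup>2 + u3\<^sup>2 = s2\<^sup>2 + s3\<^sup>2" and vv: "v2\<^sup>2 + v3\<^sup>2 = t2\<^sup>2 + t3\<^sup>2"
    and uv: "u2 * v2 + u3 * v3 = s2 * t2 + s3 * t3"
    unfolding quad_form_eq_iff by (simp_all add: power2_eq_square algebra_simps)
  define D D' where "D = u2 * v3 - u3 * v2" "D' = s2 * t3 - s3 * t2"
  have "D\<^sup>2 = (u2\<^sup>2 + u3\<^sup>2) * (v2\<^sup>2 + v3\<^sup>2) - (u2 * v2 + u3 * v3)\<^sup>2"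
    by (simp add: D_D'_def power2_eq_square algebra_simps)
  also have "\<dots> = D'\<^sup>2"
    unfolding uu vv uv by (simp add: D_D'_def power2_eq_square algebra_simps)
  finally have "D' = D \<or> D' = - D"
    by (auto simp: power2_eq_iff)
  then consider "D' = D" | "D' = - D" "D' \<noteq> 0"
    by fastforce
  then show thesis
  proof cases
    case 1
    then obtain cs sn where r: "cs\<^sup>2 + sn\<^sup>2 = 1" "s2 = cs * u2 - sn * u3" "s3 = sn * u2 + cs * u3"
      "t2 = cs * v2 - sn * v3" "t3 = sn * v2 + cs * v3"
      using rotation_of_equal_gram[OF uu vv uv] by (auto simp: D_D'_def)
    show thesis
      by (rule rotation[OF r(1)]) (simp_all add: b r lin_form_def const2_def algebra_simps)
  next
    case 2
    have "u2\<^sup>2 + u3\<^sup>2 = s2\<^sup>2 + (- s3)\<^sup>2" "v2\<^sup>2 + v3\<^sup>2 = t2\<^sup>2 + (- t3)\<^sup>2"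
      "u2 * v2 + u3 * v3 = s2 * t2 + (- s3) * (- t3)" "u2 * v3 - u3 * v2 = s2 * (- t3) - (- s3) * t2"
      using uu vv uv 2 by (simp_all add: D_D'_def)
    then obtain cs sn where r: "cs\<^sup>2 + sn\<^sup>2 = 1" "s2 = cs * u2 - sn * u3" "s3 = - (sn * u2 + cs * u3)"
      "t2 = cs * v2 - sn * v3" "t3 = - (sn * v2 + cs * v3)"
      by (rule rotation_of_equal_gram) (auto simp: algebra_simps)
    show thesis
      by (rule reflection[OF r(1)])
        (use 2 in \<open>simp_all add: D_D'_def b r lin_form_def const2_def algebra_simps\<close>)
  qed
qed

lemma dvd_if_double_eq_mult:
  fixes X g Y :: "real poly poly"
  assumes "2 * X = g * Y"
  shows "g dvd X"
proof
  have "X = const2 (1/2) * (2 * X)"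
    by (simp only: const2_half_cancel)
  also have "\<dots> = g * (const2 (1/2) * Y)"
    by (simp only: assms mult.left_commute)
  finally show "X = g * (const2 (1/2) * Y)" .
qed

lemma dvd_if_dvd_mult_both_variables:
  fixes g m :: "real poly poly"
  assumes g: "g \<noteq> 0" and dx: "g dvd lin_form 1 0 * m" and dy: "g dvd lin_form 0 1 * m"
  shows "g dvd m"
proof -
  have lx: "lin_form 1 0 * m = pCons 0 m"
    by (simp add: lin_form_def) (metis one_pCons smult_1_left)
  have ly: "lin_form 0 1 * m = smult [:0, 1:] m"
    by (simp add: lin_form_def)
  obtain Q1 where Q1: "pCons 0 m = g * Q1"
    using dx unfolding lx by (auto elim: dvdE)
  obtain Q2 where Q2: "smult [:0, 1:] m = g * Q2"
    using dy unfolding ly by (auto elim: dvdE)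
  have "g * smult [:0, 1:] Q1 = smult [:0, 1:] (pCons 0 m)"
    by (simp add: Q1)
  also have "\<dots> = g * pCons 0 Q2"
    by (simp add: Q2[symmetric])
  finally have "smult [:0, 1:] Q1 = pCons 0 Q2"
    using g mult_left_cancel by blast
  then have "coeff (smult [:0, 1:] Q1) 0 = coeff (pCons 0 Q2) 0"
    by (rule arg_cong)
  then have "[:0, 1:] * coeff Q1 0 = 0"
    by (simp only: coeff_smult coeff_pCons_0)
  then have "coeff Q1 0 = 0"
    by simp
  then obtain R where "Q1 = pCons 0 R"
    by (cases Q1) auto
  with Q1 have "m = g * R"
    by simp
  then show ?thesis
    by simp
qed

lemma dvd_if_dvd_mult_independent_lin_forms:
  fixes g w :: "real poly poly"
  assumes "g \<noteq> 0" and d: "d2 = lin_form s2 t2" "d3 = lin_form s3 t3" "s2 * t3 - s3 * t2 \<noteq> 0"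
    and "g dvd d2 * w" "g dvd d3 * w"
  shows "g dvd w"
proof -
  define D where "D = s2 * t3 - s3 * t2"
  have "D \<noteq> 0"
    using d(3) by (simp add: D_def)
  have D: "lin_form D 0 = const2 t3 * d2 + const2 (- t2) * d3"
    "lin_form 0 D = const2 (- s3) * d2 + const2 s2 * d3"
    unfolding d(1,2) lin_form_combination by (simp_all add: D_def algebra_simps)
  have xy: "lin_form 1 0 = const2 (1 / D) * lin_form D 0" "lin_form 0 1 = const2 (1 / D) * lin_form 0 D"
    using \<open>D \<noteq> 0\<close> by (simp_all add: const2_mult_lin_form)
  have "lin_form 1 0 * w = const2 (1 / D) * (const2 t3 * (d2 * w) + const2 (- t2) * (d3 * w))"
    "lin_form 0 1 * w = const2 (1 / D) * (const2 (- s3) * (d2 * w) + const2 s2 * (d3 * w))"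
    unfolding xy D by (simp_all only: distrib_left distrib_right mult.assoc)
  then have "g dvd lin_form 1 0 * w" "g dvd lin_form 0 1 * w"
    using assms(5,6) by simp_all
  then show ?thesis
    using assms(1) dvd_if_dvd_mult_both_variables by blast
qed

lemma rotation_transfers_pair:
  fixes b2 b3 c2 c3 d2 d3 e2 e3 :: "real poly poly"
  assumes g: "b2\<^sup>2 + b3\<^sup>2 \<noteq> 0" and r: "cs\<^sup>2 + sn\<^sup>2 = 1"
    and d: "d2 = const2 cs * b2 - const2 sn * b3" "d3 = const2 sn * b2 + const2 cs * b3"
    and m: "b2 * c2 + b3 * c3 = d2 * e2 + d3 * e3" and n: "b2 * c3 - b3 * c2 = d2 * e3 - d3 * e2"
  shows "e2 = const2 cs * c2 - const2 sn * c3" "e3 = const2 sn * c2 + const2 cs * c3"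
proof -
  have r': "(const2 cs)\<^sup>2 + (const2 sn)\<^sup>2 = 1"
    using r by (metis const2_1 const2_add const2_mult power2_eq_square)
  have "d2\<^sup>2 + d3\<^sup>2 = ((const2 cs)\<^sup>2 + (const2 sn)\<^sup>2) * (b2\<^sup>2 + b3\<^sup>2)"
    unfolding d by (simp add: power2_eq_square algebra_simps)
  then have gd: "d2\<^sup>2 + d3\<^sup>2 = b2\<^sup>2 + b3\<^sup>2"
    using r' by simp
  define g m n where "g = b2\<^sup>2 + b3\<^sup>2" "m = b2 * c2 + b3 * c3" "n = b2 * c3 - b3 * c2"
  have gc: "g * c2 = b2 * m - b3 * n" "g * c3 = b3 * m + b2 * n"
    by (simp_all add: g_m_n_def power2_eq_square algebra_simps)
  have ge: "g * e2 = d2 * m - d3 * n" "g * e3 = d3 * m + d2 * n"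
    unfolding g_m_n_def gd[symmetric] m n by (simp_all add: power2_eq_square algebra_simps)
  have "g * e2 = g * (const2 cs * c2 - const2 sn * c3)" "g * e3 = g * (const2 sn * c2 + const2 cs * c3)"
    unfolding ge right_diff_distrib distrib_left mult.left_commute[of g] gc d
    by (simp_all add: algebra_simps)
  moreover have "g \<noteq> 0"
    unfolding g_m_n_def by (rule g)
  ultimately show "e2 = const2 cs * c2 - const2 sn * c3" "e3 = const2 sn * c2 + const2 cs * c3"
    by simp_all
qed

text \<open>With \<open>h\<close> the rotated \<open>c\<close>, the sums and differences of \<open>h\<close> and \<open>e\<close> exhibit \<open>g\<close> as a divisor of
  \<open>d\<^sub>2 m\<close>, \<open>d\<^sub>3 m\<close>, \<open>d\<^sub>2 n\<close> and \<open>d\<^sub>3 n\<close>.\<close>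

lemma reflection_forces_dvd:
  fixes b2 b3 c2 c3 d2 d3 e2 e3 :: "real poly poly"
  assumes g: "g = b2\<^sup>2 + b3\<^sup>2" "g \<noteq> 0" and r: "cs\<^sup>2 + sn\<^sup>2 = 1"
    and d: "d2 = const2 cs * b2 - const2 sn * b3" "d3 = - (const2 sn * b2 + const2 cs * b3)"
    and indep: "d2 = lin_form s2 t2" "d3 = lin_form s3 t3" "s2 * t3 - s3 * t2 \<noteq> 0"
    and m: "m = b2 * c2 + b3 * c3" "m = d2 * e2 + d3 * e3"
    and n: "n = b2 * c3 - b3 * c2" "n = d2 * e3 - d3 * e2"
  shows "g dvd m" "g dvd n"
proof -
  have r': "(const2 cs)\<^sup>2 + (const2 sn)\<^sup>2 = 1"
    using r by (metis const2_1 const2_add const2_mult power2_eq_square)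
  have "d2\<^sup>2 + d3\<^sup>2 = ((const2 cs)\<^sup>2 + (const2 sn)\<^sup>2) * (b2\<^sup>2 + b3\<^sup>2)"
    unfolding d by (simp add: power2_eq_square algebra_simps)
  then have gd: "g = d2\<^sup>2 + d3\<^sup>2"
    using r' g(1) by simp
  have ge: "g * e2 = d2 * m - d3 * n" "g * e3 = d3 * m + d2 * n"
    unfolding gd m(2) n(2) by (simp_all add: power2_eq_square algebra_simps)
  define h2 h3 where "h2 = const2 cs * c2 - const2 sn * c3" "h3 = const2 sn * c2 + const2 cs * c3"
  have gc: "g * c2 = b2 * m - b3 * n" "g * c3 = b3 * m + b2 * n"
    unfolding g(1) m(1) n(1) by (simp_all add: power2_eq_square algebra_simps)
  have gh: "g * h2 = d2 * m + d3 * n" "g * h3 = - d3 * m + d2 * n"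
    unfolding h2_h3_def right_diff_distrib distrib_left mult.left_commute[of g] gc d
    by (simp_all add: algebra_simps)
  have "g dvd d2 * m" "g dvd d3 * m"
    by (rule dvd_if_double_eq_mult[of _ _ "h2 + e2"], simp add: distrib_left gh ge)
      (rule dvd_if_double_eq_mult[of _ _ "e3 - h3"], simp add: right_diff_distrib gh ge)
  then show "g dvd m"
    using dvd_if_dvd_mult_independent_lin_forms[OF g(2) indep] by blast
  have "g dvd d2 * n" "g dvd d3 * n"
    by (rule dvd_if_double_eq_mult[of _ _ "e3 + h3"], simp add: distrib_left gh ge)
      (rule dvd_if_double_eq_mult[of _ _ "h2 - e2"], simp add: right_diff_distrib gh ge)
  then show "g dvd n"
    using dvd_if_dvd_mult_independent_lin_forms[OF g(2) indep] by blast
qed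

lemma same_invariants_oriented_rotation:
  fixes b2 b3 c2 c3 d2 d3 e2 e3 :: "real poly poly"
  assumes b: "hom2 1 b2" "hom2 1 b3" "hom2 1 d2" "hom2 1 d3"
    and sq: "b2\<^sup>2 + b3\<^sup>2 = d2\<^sup>2 + d3\<^sup>2" and m: "b2 * c2 + b3 * c3 = d2 * e2 + d3 * e3"
    and n: "b2 * c3 - b3 * c2 = d2 * e3 - d3 * e2"
    and coprime: "\<And>h. h dvd b2\<^sup>2 + b3\<^sup>2 \<Longrightarrow> h dvd b2 * c2 + b3 * c3 \<Longrightarrow> h dvd c2\<^sup>2 + c3\<^sup>2 \<Longrightarrow> is_unit h"
    and g: "b2\<^sup>2 + b3\<^sup>2 \<noteq> 0"
  obtains cs sn where "cs\<^sup>2 + sn\<^sup>2 = 1"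
    "d2 = const2 cs * b2 - const2 sn * b3" "d3 = const2 sn * b2 + const2 cs * b3"
    "e2 = const2 cs * c2 - const2 sn * c3" "e3 = const2 sn * c2 + const2 cs * c3"
proof -
  obtain u2 v2 u3 v3 s2 t2 s3 t3 where lin: "b2 = lin_form u2 v2" "b3 = lin_form u3 v3"
    "d2 = lin_form s2 t2" "d3 = lin_form s3 t3"
    using b hom2_1_eq_lin_form by metis
  from lin sq show thesis
  proof (cases rule: lin_forms_equal_sum_squaresE)
    case (rotation cs sn)
    then show thesis
      using that rotation_transfers_pair[OF g rotation(1-3) m n] by blast
  next
    case (reflection cs sn)
    define G where "G = b2\<^sup>2 + b3\<^sup>2"
    have "G \<noteq> 0"
      using g by (simp add: G_def)
    have "G dvd b2 * c2 + b3 * c3" "G dvd b2 * c3 - b3 * c2"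
      using reflection_forces_dvd[OF G_def \<open>G \<noteq> 0\<close> reflection(1-3) lin(3,4) reflection(4) refl m refl n]
      by blast+
    then obtain M N where MN: "b2 * c2 + b3 * c3 = G * M" "b2 * c3 - b3 * c2 = G * N"
      by (auto elim!: dvdE)
    have "G * (c2\<^sup>2 + c3\<^sup>2) = (b2 * c2 + b3 * c3)\<^sup>2 + (b2 * c3 - b3 * c2)\<^sup>2"
      by (simp add: G_def power2_eq_square algebra_simps)
    also have "\<dots> = G * (G * (M\<^sup>2 + N\<^sup>2))"
      unfolding MN by (simp add: power2_eq_square algebra_simps)
    finally have "c2\<^sup>2 + c3\<^sup>2 = G * (M\<^sup>2 + N\<^sup>2)"
      using \<open>G \<noteq> 0\<close> by simp
    then have "G dvd c2\<^sup>2 + c3\<^sup>2"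
      by simp
    then have "is_unit G"
      using coprime \<open>G dvd b2 * c2 + b3 * c3\<close> by (simp add: G_def)
    moreover have "hom2 2 G"
      unfolding G_def using hom2_power2[OF b(1)] hom2_power2[OF b(2)] by (simp add: hom2_add)
    ultimately show thesis
      using hom2_not_unit[of 2 G] by simp
  qed
qed

lemma same_invariants_orthogonal:
  fixes b2 b3 c2 c3 d2 d3 e2 e3 :: "real poly poly"
  assumes b: "hom2 1 b2" "hom2 1 b3" "hom2 1 d2" "hom2 1 d3"
    and sq: "b2\<^sup>2 + b3\<^sup>2 = d2\<^sup>2 + d3\<^sup>2" and m: "b2 * c2 + b3 * c3 = d2 * e2 + d3 * e3"
    and c: "c2\<^sup>2 + c3\<^sup>2 = e2\<^sup>2 + e3\<^sup>2"
    and coprime: "\<And>h. h dvd b2\<^sup>2 + b3\<^sup>2 \<Longrightarrow> h dvd b2 * c2 + b3 * c3 \<Longrightarrow> h dvd c2\<^sup>2 + c3\<^sup>2 \<Longrightarrow> is_unit h"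
    and g: "b2\<^sup>2 + b3\<^sup>2 \<noteq> 0"
  obtains r11 r21 r12 r22 where "r11\<^sup>2 + r21\<^sup>2 = 1" "r12\<^sup>2 + r22\<^sup>2 = 1" "r11 * r12 + r21 * r22 = 0"
    "d2 = const2 r11 * b2 + const2 r21 * b3" "d3 = const2 r12 * b2 + const2 r22 * b3"
    "e2 = const2 r11 * c2 + const2 r21 * c3" "e3 = const2 r12 * c2 + const2 r22 * c3"
proof -
  have "(b2 * c3 - b3 * c2)\<^sup>2 = (b2\<^sup>2 + b3\<^sup>2) * (c2\<^sup>2 + c3\<^sup>2) - (b2 * c2 + b3 * c3)\<^sup>2"
    by (simp add: power2_eq_square algebra_simps)
  also have "\<dots> = (d2 * e3 - d3 * e2)\<^sup>2"
    unfolding sq m c by (simp add: power2_eq_square algebra_simps)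
  finally have "b2 * c3 - b3 * c2 = d2 * e3 - d3 * e2 \<or> b2 * c3 - b3 * c2 = - (d2 * e3 - d3 * e2)"
    by (simp only: power2_eq_iff)
  then consider "b2 * c3 - b3 * c2 = d2 * e3 - d3 * e2" | "b2 * c3 - b3 * c2 = - (d2 * e3 - d3 * e2)"
    by blast
  then show thesis
  proof cases
    case 1
    obtain cs sn where r: "cs\<^sup>2 + sn\<^sup>2 = 1"
      "d2 = const2 cs * b2 - const2 sn * b3" "d3 = const2 sn * b2 + const2 cs * b3"
      "e2 = const2 cs * c2 - const2 sn * c3" "e3 = const2 sn * c2 + const2 cs * c3"
      by (rule same_invariants_oriented_rotation[OF b sq m 1 coprime g])
    then show thesis
      by (intro that[of cs "- sn" sn cs]) (simp_all add: const2_minus add.commute)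
  next
    case 2
    have "hom2 1 (- d3)"
      using hom2_diff[OF hom2_zero b(4)] by simp
    moreover have "b2\<^sup>2 + b3\<^sup>2 = d2\<^sup>2 + (- d3)\<^sup>2" "b2 * c2 + b3 * c3 = d2 * e2 + (- d3) * (- e3)"
      using sq m by simp_all
    moreover have "b2 * c3 - b3 * c2 = d2 * (- e3) - (- d3) * e2"
      using 2 by (simp add: algebra_simps)
    ultimately obtain cs sn where r: "cs\<^sup>2 + sn\<^sup>2 = 1"
      "d2 = const2 cs * b2 - const2 sn * b3" "- d3 = const2 sn * b2 + const2 cs * b3"
      "e2 = const2 cs * c2 - const2 sn * c3" "- e3 = const2 sn * c2 + const2 cs * c3"
      by (rule same_invariants_oriented_rotation[OF b(1-3) _ _ _ _ coprime g])
    moreover have "d3 = - (const2 sn * b2 + const2 cs * b3)" "e3 = - (const2 sn * c2 + const2 cs * c3)"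
      using r(3,5) by (metis minus_minus)+
    ultimately show thesis
      by (intro that[of cs "- sn" "- sn" "- cs"]) (simp_all add: const2_minus add.commute)
  qed
qed

lemma orthogonal_matrix_block:
  assumes "r11\<^sup>2 + r21\<^sup>2 = 1" "r12\<^sup>2 + r22\<^sup>2 = 1" "r11 * r12 + r21 * r22 = 0"
  shows "orthogonal_matrix (vector [vector [1, 0, 0], vector [0, r11, r12], vector [0, r21, r22]] :: real^3^3)"
  unfolding orthogonal_matrix
  using assms by (simp add: vec_eq_iff forall_3 matrix_matrix_mult_def sum_3 transpose_def mat_def
      power2_eq_square algebra_simps)

text \<open>Any common factor of \<open>g = b\<^sub>2\<^sup>2 + b\<^sub>3\<^sup>2\<close>, \<open>b\<^sub>2 c\<^sub>2 + b\<^sub>3 c\<^sub>3\<close> and \<open>c\<^sub>2\<^sup>2 + c\<^sub>3\<^sup>2\<close> divides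
  \<open>f\<^sub>3\<close> and \<open>4 f\<^sub>4 - f\<^sub>2\<^sup>2 = 4 (c\<^sub>2\<^sup>2 + c\<^sub>3\<^sup>2) - (4 c\<^sub>1 + g) g\<close>.\<close>

lemma normal_reps_same_xi_orth_equiv:
  fixes q p :: "real poly poly poly ^ 3"
  assumes f: "hom2 2 f2" "hom2 4 f4" and coprime: "gcd f3 (4 * f4 - f2\<^sup>2) = 1"
    and q: "q \<in> sos3_reps (quartic f2 f3 f4)" "normal_rep q"
    and p: "p \<in> sos3_reps (quartic f2 f3 f4)" "normal_rep p"
    and xi: "rep_xi q = rep_xi p"
  shows "(q, p) \<in> orth_equiv"
proof -
  obtain c1 c2 c3 b2 b3 where s: "q$1 = [:c1, 0, 1:]" "q$2 = [:c2, b2:]" "q$3 = [:c3, b3:]"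
    "hom2 2 c1" "hom2 2 c2" "hom2 2 c3" "hom2 1 b2" "hom2 1 b3"
    "f2 = 2 * c1 + b2\<^sup>2 + b3\<^sup>2" "f3 = 2 * (b2 * c2 + b3 * c3)" "f4 = c1\<^sup>2 + c2\<^sup>2 + c3\<^sup>2"
    "rep_xi q = 2 * c1"
    by (rule normal_repE[OF q])
  obtain a1 e2 e3 d2 d3 where t: "p$1 = [:a1, 0, 1:]" "p$2 = [:e2, d2:]" "p$3 = [:e3, d3:]"
    "hom2 2 a1" "hom2 2 e2" "hom2 2 e3" "hom2 1 d2" "hom2 1 d3"
    "f2 = 2 * a1 + d2\<^sup>2 + d3\<^sup>2" "f3 = 2 * (d2 * e2 + d3 * e3)" "f4 = a1\<^sup>2 + e2\<^sup>2 + e3\<^sup>2"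
    "rep_xi p = 2 * a1"
    by (rule normal_repE[OF p])
  have "a1 = c1"
    using xi s(12) t(12) by simp
  have sq: "b2\<^sup>2 + b3\<^sup>2 = d2\<^sup>2 + d3\<^sup>2" and c: "c2\<^sup>2 + c3\<^sup>2 = e2\<^sup>2 + e3\<^sup>2"
    using s(9,11) t(9,11) \<open>a1 = c1\<close> by (simp_all add: add.assoc)
  have m: "b2 * c2 + b3 * c3 = d2 * e2 + d3 * e3"
    using s(10) t(10) by simp
  have unit: "is_unit h"
    if "h dvd b2\<^sup>2 + b3\<^sup>2" "h dvd b2 * c2 + b3 * c3" "h dvd c2\<^sup>2 + c3\<^sup>2" for h
  proof -
    have "h dvd f3"
      unfolding s(10) using that(2) by (rule dvd_mult)
    have "4 * f4 - f2\<^sup>2 = 4 * (c2\<^sup>2 + c3\<^sup>2) - (4 * c1 + (b2\<^sup>2 + b3\<^sup>2)) * (b2\<^sup>2 + b3\<^sup>2)"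
      unfolding s(9,11) by (simp add: power2_eq_square algebra_simps)
    moreover have "h dvd 4 * (c2\<^sup>2 + c3\<^sup>2) - (4 * c1 + (b2\<^sup>2 + b3\<^sup>2)) * (b2\<^sup>2 + b3\<^sup>2)"
      using that(1,3) by (intro dvd_diff dvd_mult dvd_mult2)
    ultimately have "h dvd 4 * f4 - f2\<^sup>2"
      by simp
    then show ?thesis
      using gcd_greatest[OF \<open>h dvd f3\<close> \<open>h dvd 4 * f4 - f2\<^sup>2\<close>] coprime by simp
  qed
  have "b2\<^sup>2 + b3\<^sup>2 \<noteq> 0"
  proof
    assume "b2\<^sup>2 + b3\<^sup>2 = 0"
    then have "f3 = 0"
      using s(10) by (simp add: sum_power2_eq_zero_iff)
    have "hom2 4 (4 * f4 - f2\<^sup>2)"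
      using hom2_power2[OF f(1)] f(2) by (simp add: hom2_diff hom2_numeral_mult)
    then have "f3 \<noteq> 0"
      using hom2_gcd_eq_1_imp_nonzero[OF _ _ coprime] by simp
    with \<open>f3 = 0\<close> show False
      by simp
  qed
  then obtain r11 r12 r21 r22 where r: "r11\<^sup>2 + r21\<^sup>2 = 1" "r12\<^sup>2 + r22\<^sup>2 = 1" "r11 * r12 + r21 * r22 = 0"
    "d2 = const2 r11 * b2 + const2 r21 * b3" "d3 = const2 r12 * b2 + const2 r22 * b3"
    "e2 = const2 r11 * c2 + const2 r21 * c3" "e3 = const2 r12 * c2 + const2 r22 * c3"
    using same_invariants_orthogonal[OF s(7,8) t(7,8) sq m c unit] by blast
  define S :: "real^3^3" where "S = vector [vector [1, 0, 0], vector [0, r11, r12], vector [0, r21, r22]]"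
  have "p = orth_act S q"
    unfolding vec_eq_iff forall_3 orth_act_def sum_3 S_def
    using s(1-3) t(1-3) r(4-7) \<open>a1 = c1\<close> by (simp add: const3_def)
  then show ?thesis
    unfolding orth_equiv_iff using orthogonal_matrix_block[OF r(1-3)] S_def by blast
qed

lemma sos3_reps_same_xi_orth_equiv:
  fixes p p' :: "real poly poly poly ^ 3"
  assumes f: "hom2 2 f2" "hom2 4 f4" "gcd f3 (4 * f4 - f2\<^sup>2) = 1"
    and p: "p \<in> sos3_reps (quartic f2 f3 f4)" "p' \<in> sos3_reps (quartic f2 f3 f4)"
    and xi: "rep_xi p = rep_xi p'"
  shows "(p, p') \<in> orth_equiv"
proof -
  obtain q where q: "q \<in> sos3_reps (quartic f2 f3 f4)" "(p, q) \<in> orth_equiv" "normal_rep q"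
    using exists_orth_equiv_normal_rep[OF p(1)] .
  obtain q' where q': "q' \<in> sos3_reps (quartic f2 f3 f4)" "(p', q') \<in> orth_equiv" "normal_rep q'"
    using exists_orth_equiv_normal_rep[OF p(2)] .
  have "rep_xi q = rep_xi q'"
    using xi rep_xi_orth_equiv[OF q(2)] rep_xi_orth_equiv[OF q'(2)] by simp
  then have "(q, q') \<in> orth_equiv"
    using normal_reps_same_xi_orth_equiv[OF f q(1,3) q'(1,3)] by blast
  moreover have "sym orth_equiv" "trans orth_equiv"
    using equiv_orth_equiv by (auto elim: equivE)
  ultimately show ?thesis
    using q(2) q'(2) by (meson symD transD)
qed

section \<open>Counting the classes\<close>

lemma quotient_eqpoll_image:
  assumes r: "equiv UNIV r" and resp: "\<And>x y. (x, y) \<in> r \<Longrightarrow> f x = f y"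
    and inj: "\<And>x y. x \<in> A \<Longrightarrow> y \<in> A \<Longrightarrow> f x = f y \<Longrightarrow> (x, y) \<in> r"
  shows "A // r \<approx> f ` A"
proof -
  have cls: "f ` (r `` {x}) = {f x}" for x
  proof
    show "f ` (r `` {x}) \<subseteq> {f x}"
      using resp by auto
    show "{f x} \<subseteq> f ` (r `` {x})"
      using equiv_class_self[OF r UNIV_I] by blast
  qed
  have "bij_betw (\<lambda>X. the_elem (f ` X)) (A // r) (f ` A)"
  proof (rule bij_betw_imageI)
    show "inj_on (\<lambda>X. the_elem (f ` X)) (A // r)"
    proof (rule inj_onI)
      fix X Y
      assume "X \<in> A // r" "Y \<in> A // r" and eq: "the_elem (f ` X) = the_elem (f ` Y)"
      then obtain x y where "x \<in> A" "X = r `` {x}" "y \<in> A" "Y = r `` {y}"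
        by (auto elim!: quotientE)
      moreover from this eq have "f x = f y"
        by (simp add: cls)
      ultimately show "X = Y"
        using equiv_class_eq[OF r] inj by blast
    qed
    show "(\<lambda>X. the_elem (f ` X)) ` (A // r) = f ` A"
      unfolding proj_image[symmetric] image_image proj_def by (simp add: cls)
  qed
  then show ?thesis
    unfolding eqpoll_def by blast
qed

lemma image_rep_xi_sos3_reps:
  assumes f: "hom2 2 f2" "hom2 3 f3" "hom2 4 f4" and coprime: "gcd f3 (4 * f4 - f2\<^sup>2) = 1"
  shows "rep_xi ` sos3_reps (quartic f2 f3 f4) = {\<xi>. admissible_xi f2 f3 f4 \<xi>}"
proof
  show "rep_xi ` sos3_reps (quartic f2 f3 f4) \<subseteq> {\<xi>. admissible_xi f2 f3 f4 \<xi>}"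
    using admissible_rep_xi by blast
  have "hom2 4 (4 * f4 - f2\<^sup>2)"
    using hom2_power2[OF f(1)] f(3) by (simp add: hom2_diff hom2_numeral_mult)
  then have "f3 \<noteq> 0"
    using hom2_gcd_eq_1_imp_nonzero[OF _ _ coprime] by simp
  show "{\<xi>. admissible_xi f2 f3 f4 \<xi>} \<subseteq> rep_xi ` sos3_reps (quartic f2 f3 f4)"
  proof
    fix \<xi>
    assume "\<xi> \<in> {\<xi>. admissible_xi f2 f3 f4 \<xi>}"
    then obtain q where "q \<in> sos3_reps (quartic f2 f3 f4)" "rep_xi q = \<xi>"
      using exists_sos3_rep_with_xi[OF f \<open>f3 \<noteq> 0\<close>] by blast
    then show "\<xi> \<in> rep_xi ` sos3_reps (quartic f2 f3 f4)"
      by blast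
  qed
qed

theorem corollary3p9:
  fixes f2 f3 f4 :: "real poly poly"
  assumes "hom2 2 f2" and "hom2 3 f3" and "hom2 4 f4"
    and "gcd f3 (4 * f4 - f2\<^sup>2) = 1"
  shows "(sos3_reps (quartic f2 f3 f4) // orth_equiv) \<approx>
    {\<xi>. hom2 2 \<xi> \<and> (\<exists>\<eta>. hom2 3 \<eta> \<and>
         \<eta>\<^sup>2 + f3\<^sup>2 = (f2 - \<xi>) * (4 * f4 - \<xi>\<^sup>2) \<and>
         psd2 (f2 - \<xi>) \<and> psd2 (4 * f4 - \<xi>\<^sup>2))}"
proof -
  have "sos3_reps (quartic f2 f3 f4) // orth_equiv \<approx> rep_xi ` sos3_reps (quartic f2 f3 f4)"
    using equiv_orth_equiv rep_xi_orth_equiv sos3_reps_same_xi_orth_equiv[OF assms(1,3,4)]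
    by (rule quotient_eqpoll_image)
  then show ?thesis
    unfolding image_rep_xi_sos3_reps[OF assms] admissible_xi_def .
qed

end
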